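(* Let $r\ge1$ and $\omega_1,\dots,\omega_r\in\mathbb{C}$ with $\mathrm{Re}(\omega_j)>0$. The function $Z(s,\boldsymbol\omega)$, defined by an absolutely convergent product for $\mathrm{Re}(s)>1$, extends meromorphically to $s\in\mathbb{C}$, and as meromorphic functions $$Z(s,(\omega_1,\dots,\omega_{r-1},\omega_r))=Z(s,(\omega_1,\dots,\omega_{r-1}))\cdot Z(s+\omega_r,(\omega_1,\dots,\omega_{r-1},\omega_r)),$$ and $$Z(s,\boldsymbol\omega)\times\prod_{j=1}^{r}\ \prod_{1\le k_1<\cdots<k_j\le r}Z(s+\omega_{k_1}+\cdots+\omega_{k_j},\boldsymbol\omega)^{(-1)^j}=\zeta(s).$$
   Context: $\zeta$ is the Riemann zeta function. For $\boldsymbol\omega=(\omega_1,\dots,\omega_r)$ with $\mathrm{Re}(\omega_j)>0$, $$Z(s,\boldsymbol\omega):=\prod_{n_1,\dots,n_r\ge0}\ \prod_{p\text{ prime}}\big(1-p^{-(s+n_1\omega_1+\cdots+n_r\omega_r)}\big)^{-1}=\prod_{n_1,\dots,n_r\ge0}\zeta(s+n_1\omega_1+\cdots+n_r\omega_r),$$ and for the empty tuple ($r=0$) the convention is $Z(s,())=\zeta(s)$. *)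

theory Defs
  imports "HOL-Complex_Analysis.Complex_Analysis"
begin

definition zeta_series :: "complex \<Rightarrow> complex" where
  "zeta_series s = (\<Sum>n. inverse (of_nat (Suc n) powr s))"

definition multi_idx :: "nat \<Rightarrow> (nat \<Rightarrow> nat) set" where
  "multi_idx r = PiE {..<r} (\<lambda>_. UNIV)"

definition idx_box :: "nat \<Rightarrow> nat \<Rightarrow> (nat \<Rightarrow> nat) set" where
  "idx_box r N = PiE {..<r} (\<lambda>_. {..<N})"

definition Z_factor :: "complex list \<Rightarrow> complex \<Rightarrow> (nat \<Rightarrow> nat) \<Rightarrow> complex" where
  "Z_factor ws s n = zeta_series (s + (\<Sum>i<length ws. of_nat (n i) * ws ! i))"

definition Z_partial :: "complex list \<Rightarrow> complex \<Rightarrow> nat \<Rightarrow> complex" where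
  "Z_partial ws s N = (\<Prod>n\<in>idx_box (length ws) N. Z_factor ws s n)"

definition Z_prod :: "complex list \<Rightarrow> complex \<Rightarrow> complex" where
  "Z_prod ws s = lim (Z_partial ws s)"

end

theory Submission
  imports Defs
begin

text \<open>For \<open>Re s > 1\<close> each factor satisfies \<open>\<zeta>(s + n\<cdot>\<omega>) - 1 = O(2\<^sup>-\<^sup>R\<^sup>e \<^sup>s \<^sup>- \<^sup>c \<^sup>|\<^sup>n\<^sup>|)\<close>
  with \<open>c = min Re \<omega>\<^sub>j\<close>, so the product converges absolutely, locally uniformly in \<open>s\<close>.
  Splitting the multi-indices according to whether \<open>n\<^sub>r = 0\<close> gives the shift relation
  \<open>Z(s, \<omega>) = Z(s, \<omega>') Z(s + \<omega>\<^sub>r, \<omega>)\<close>. Iterating it until \<open>s + N\<omega>\<^sub>r\<close> lies in the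
  half-plane of convergence continues \<open>Z(\<cdot>, \<omega>)\<close> from \<open>Z(\<cdot>, \<omega>')\<close>, so by induction on \<open>r\<close>
  everything reduces to a continuation of \<open>\<zeta>\<close>; the latter comes from the binomial-series
  recursion \<open>(s - 1) \<zeta>\<^sub>4(s) + \<Sum>\<^sub>k c\<^sub>k(s) \<zeta>\<^sub>4(s + k + 1) = 3\<^sup>1\<^sup>-\<^sup>s\<close> for
  \<open>\<zeta>\<^sub>4(s) = \<Sum>\<^sub>n (n + 4)\<^sup>-\<^sup>s\<close>, which moves the domain one unit to the left at a time.
  Applying the shift relation once per parameter collapses the alternating product over shifts
  to \<open>\<zeta>(s)\<close> far to the right, and the identity theorem propagates both relations to the whole
  plane away from a discrete set.\<close>

section \<open>Tails of the zeta series\<close>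

definition zeta_tail :: "nat \<Rightarrow> complex \<Rightarrow> complex" where
  "zeta_tail k s = (\<Sum>n. inverse (of_nat (n + k) powr s))"

definition real_zeta_tail :: "nat \<Rightarrow> real \<Rightarrow> real" where
  "real_zeta_tail k \<sigma> = (\<Sum>n. real (n + k) powr (- \<sigma>))"

lemma norm_inverse_of_nat_powr: "norm (inverse (of_nat m powr s :: complex)) = real m powr (- Re s)"
proof -
  have "norm ((of_nat m :: complex) powr s) = real m powr Re s"
    by (subst norm_powr_real_powr) auto
  thus ?thesis by (simp add: norm_inverse powr_minus)
qed

lemma summable_real_powr_shift:
  assumes "\<sigma> > 1"
  shows "summable (\<lambda>n. real (n + k) powr (- \<sigma>))"
proof -
  have "summable (\<lambda>n. real n powr (- \<sigma>))"
    using assms by (subst summable_real_powr_iff) auto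
  thus ?thesis by (subst summable_iff_shift[where f = "\<lambda>n. real n powr (- \<sigma>)"])
qed

lemma summable_norm_zeta_tail_terms:
  assumes "Re s > 1"
  shows "summable (\<lambda>n. norm (inverse (of_nat (n + k) powr s :: complex)))"
  unfolding norm_inverse_of_nat_powr using assms by (intro summable_real_powr_shift) simp

lemma summable_zeta_tail_terms:
  assumes "Re s > 1"
  shows "summable (\<lambda>n. inverse (of_nat (n + k) powr s :: complex))"
  by (rule summable_norm_cancel[OF summable_norm_zeta_tail_terms[OF assms]])

lemma zeta_series_eq_zeta_tail: "zeta_series s = zeta_tail 1 s"
  by (simp add: zeta_series_def zeta_tail_def)

lemma zeta_tail_split:
  assumes "Re s > 1"
  shows "zeta_tail k s = (\<Sum>j<m. inverse (of_nat (j + k) powr s)) + zeta_tail (k + m) s"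
  using suminf_split_initial_segment[OF summable_zeta_tail_terms[OF assms, of k], of m]
  by (simp add: zeta_tail_def add_ac)

lemma real_zeta_tail_nonneg: "\<sigma> > 1 \<Longrightarrow> real_zeta_tail k \<sigma> \<ge> 0"
  unfolding real_zeta_tail_def by (intro suminf_nonneg summable_real_powr_shift) auto

lemma norm_zeta_tail_le:
  assumes "k \<ge> 1" "1 < \<sigma>" "\<sigma> \<le> Re s"
  shows "norm (zeta_tail k s) \<le> real_zeta_tail k \<sigma> * real k powr (\<sigma> - Re s)"
proof -
  have term_le: "norm (inverse (of_nat (n + k) powr s :: complex))
                   \<le> real (n + k) powr (- \<sigma>) * real k powr (\<sigma> - Re s)" for n
  proof -
    have "norm (inverse (of_nat (n + k) powr s :: complex))
            = real (n + k) powr (- \<sigma>) * real (n + k) powr (\<sigma> - Re s)"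
      unfolding norm_inverse_of_nat_powr by (simp add: powr_add [symmetric])
    also have "\<dots> \<le> real (n + k) powr (- \<sigma>) * real k powr (\<sigma> - Re s)"
      using assms by (intro mult_left_mono powr_mono2') auto
    finally show ?thesis .
  qed
  have "norm (zeta_tail k s) \<le> (\<Sum>n. real (n + k) powr (- \<sigma>) * real k powr (\<sigma> - Re s))"
    unfolding zeta_tail_def
    by (rule norm_suminf_le[OF term_le]) (intro summable_mult2 summable_real_powr_shift assms)
  also have "\<dots> = real_zeta_tail k \<sigma> * real k powr (\<sigma> - Re s)"
    unfolding real_zeta_tail_def
    by (rule suminf_mult2 [symmetric]) (intro summable_real_powr_shift assms)
  finally show ?thesis .
qed

lemma holomorphic_on_Re_gt_uniform_limit:
  assumes "\<And>n. f n holomorphic_on {s. Re s > c}"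
      and "\<And>d. d > 0 \<Longrightarrow> uniform_limit {s. Re s \<ge> c + d} f g sequentially"
  shows "g holomorphic_on {s. Re s > c}"
proof (rule holomorphic_uniform_sequence[OF open_halfspace_Re_gt assms(1)])
  fix x :: complex assume x: "x \<in> {s. Re s > c}"
  define d where "d = (Re x - c) / 2"
  have d: "d > 0" using x by (simp add: d_def)
  have sub: "cball x d \<subseteq> {s. Re s \<ge> c + d}"
  proof
    fix y assume "y \<in> cball x d"
    hence "Re x - Re y \<le> d"
      using abs_Re_le_cmod[of "x - y"] by (auto simp: dist_norm dest!: abs_le_D1)
    thus "y \<in> {s. Re s \<ge> c + d}" by (simp add: d_def field_simps)
  qed
  show "\<exists>d>0. cball x d \<subseteq> {s. Re s > c} \<and> uniform_limit (cball x d) f g sequentially"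
    using d sub uniform_limit_on_subset[OF assms(2)[OF d] sub] by (intro exI[of _ d]) auto
qed

lemma holomorphic_zeta_tail:
  assumes "k \<ge> 1"
  shows "zeta_tail k holomorphic_on {s. Re s > 1}"
  unfolding zeta_tail_def
proof (rule holomorphic_on_Re_gt_uniform_limit)
  fix m
  have "(of_nat (n + k) :: complex) \<noteq> 0" for n
    unfolding of_nat_eq_0_iff using assms by simp
  thus "(\<lambda>s. \<Sum>n<m. inverse (of_nat (n + k) powr s)) holomorphic_on {s. Re s > 1}"
    by (intro holomorphic_intros holomorphic_on_powr_right) (simp_all only: powr_eq_0_iff, auto)
next
  fix d :: real assume d: "d > 0"
  show "uniform_limit {s. Re s \<ge> 1 + d} (\<lambda>m s. \<Sum>n<m. inverse (of_nat (n + k) powr s))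
          (\<lambda>s. \<Sum>n. inverse (of_nat (n + k) powr s)) sequentially"
  proof (rule Weierstrass_m_test)
    fix n s assume "s \<in> {s. Re s \<ge> 1 + d}"
    thus "norm (inverse (of_nat (n + k) powr s :: complex)) \<le> real (n + k) powr (- (1 + d))"
      unfolding norm_inverse_of_nat_powr using assms by (intro powr_mono) auto
  qed (use d in \<open>intro summable_real_powr_shift, simp\<close>)
qed

lemma holomorphic_zeta_tail_shift:
  assumes "k \<ge> 1" "\<And>s. s \<in> S \<Longrightarrow> Re (s + c) > 1"
  shows "(\<lambda>s. zeta_tail k (s + c)) holomorphic_on S"
proof -
  have "zeta_tail k \<circ> (\<lambda>s. s + c) holomorphic_on S"
    by (rule holomorphic_on_compose_gen[OF _ holomorphic_zeta_tail[OF assms(1)]])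
       (use assms(2) in \<open>auto intro!: holomorphic_intros\<close>)
  thus ?thesis by (simp add: o_def)
qed

section \<open>Meromorphic continuation of the zeta function\<close>

lemma norm_gbinomial_le:
  fixes a :: complex
  assumes "norm a \<le> real A"
  shows "norm (a gchoose k) \<le> 2 ^ (A + k)"
proof -
  have "norm (a gchoose k) \<le> real ((A + k) choose k)"
  proof (induction k)
    case 0 thus ?case by simp
  next
    case (Suc k)
    have diff: "norm (a - of_nat k) \<le> real (A + k)"
      using norm_triangle_ineq4[of a "of_nat k"] assms by simp
    have nk: "norm (of_nat k + 1 :: complex) = real k + 1"
      using norm_of_nat[of "Suc k", where 'a = complex] by (simp add: add.commute)
    have "norm (a gchoose Suc k) = norm (a gchoose k) * (norm (a - of_nat k) / (real k + 1))"
      by (simp add: gbinomial_Suc_rec norm_mult norm_divide nk)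
    also have "\<dots> \<le> real ((A + k) choose k) * (real (A + k + 1) / (real k + 1))"
      using Suc.IH diff by (intro mult_mono divide_right_mono) auto
    also have "\<dots> = real ((A + Suc k) choose Suc k)"
    proof -
      have "real (Suc (A + k)) * real ((A + k) choose k)
              = real (Suc (A + k) choose Suc k) * real (Suc k)"
        by (subst of_nat_mult [symmetric])+ (rule arg_cong[where f = real], rule Suc_times_binomial_eq)
      thus ?thesis by (simp add: field_simps)
    qed
    finally show ?case .
  qed
  also have "\<dots> \<le> 2 ^ (A + k)"
    using binomial_le_pow2[of "A + k" k] by (metis of_nat_le_iff of_nat_numeral of_nat_power)
  finally show ?thesis .
qed

lemma infsum_eq_suminf_abs:
  fixes f :: "nat \<Rightarrow> 'a::banach"
  assumes "summable (\<lambda>n. norm (f n))"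
  shows "infsum f UNIV = suminf f"
proof -
  have "f summable_on UNIV" using norm_summable_imp_summable_on[OF assms] .
  hence "f sums infsum f UNIV" by (intro has_sum_imp_sums has_sum_infsum)
  thus ?thesis by (simp add: sums_iff)
qed

lemma summable_on_Times_mult_nonneg:
  fixes g h :: "nat \<Rightarrow> real"
  assumes g: "summable g" "\<And>j. g j \<ge> 0" and h: "summable h" "\<And>k. h k \<ge> 0"
  shows "(\<lambda>(j, k). g j * h k) summable_on UNIV \<times> UNIV"
proof (rule summable_on_SigmaI[where g = "\<lambda>j. g j * suminf h"])
  have "(h has_sum suminf h) UNIV"
    using h by (intro sums_nonneg_imp_has_sum) (auto simp: summable_sums)
  thus "((\<lambda>k. case (j, k) of (j, k) \<Rightarrow> g j * h k) has_sum g j * suminf h) UNIV" for j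
    using has_sum_cmult_right by fastforce
  show "(\<lambda>j. g j * suminf h) summable_on UNIV"
    using g by (intro summable_on_cmult_left norm_summable_imp_summable_on) auto
qed (use g h in auto)

lemma suminf_swap_dominated:
  fixes t :: "nat \<Rightarrow> nat \<Rightarrow> 'a::banach" and g h :: "nat \<Rightarrow> real"
  assumes g: "summable g" "\<And>j. g j \<ge> 0" and h: "summable h" "\<And>k. h k \<ge> 0"
      and t: "\<And>j k. norm (t j k) \<le> g j * h k"
  shows "(\<Sum>j. \<Sum>k. t j k) = (\<Sum>k. \<Sum>j. t j k)"
    and "summable (\<lambda>k. \<Sum>j. t j k)"
proof -
  from summable_on_Times_mult_nonneg[OF g h]
  have "(\<lambda>x. norm ((\<lambda>(j, k). t j k) x)) summable_on UNIV \<times> UNIV"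
    by (rule Infinite_Sum.abs_summable_on_comparison_test') (use t in auto)
  hence "(\<lambda>(j, k). t j k) summable_on UNIV \<times> UNIV"
    by (rule abs_summable_summable)
  hence swap: "(\<Sum>\<^sub>\<infinity>j. \<Sum>\<^sub>\<infinity>k. t j k) = (\<Sum>\<^sub>\<infinity>k. \<Sum>\<^sub>\<infinity>j. t j k)"
    by (rule infsum_swap_banach)
  have rows: "summable (\<lambda>k. norm (t j k))" for j
    by (rule summable_comparison_test'[where g = "\<lambda>k. g j * h k"])
       (use t h in \<open>auto intro: summable_mult\<close>)
  have cols: "summable (\<lambda>j. norm (t j k))" for k
    by (rule summable_comparison_test'[where g = "\<lambda>j. g j * h k"])
       (use t g in \<open>auto intro: summable_mult2\<close>)
  have row_bound: "norm (\<Sum>k. t j k) \<le> g j * suminf h" for j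
    using norm_suminf_le[OF t summable_mult[OF h(1)]] suminf_mult[OF h(1)] by metis
  have rows_sum: "summable (\<lambda>j. norm (\<Sum>k. t j k))"
    by (rule summable_comparison_test'[where g = "\<lambda>j. g j * suminf h"])
       (use row_bound g in \<open>auto intro: summable_mult2\<close>)
  have col_bound: "norm (\<Sum>j. t j k) \<le> suminf g * h k" for k
    using norm_suminf_le[OF t summable_mult2[OF g(1)]] suminf_mult2[OF g(1)] by metis
  have cols_sum: "summable (\<lambda>k. norm (\<Sum>j. t j k))"
    by (rule summable_comparison_test'[where g = "\<lambda>k. suminf g * h k"])
       (use col_bound h in \<open>auto intro: summable_mult\<close>)
  show "(\<Sum>j. \<Sum>k. t j k) = (\<Sum>k. \<Sum>j. t j k)"
    using swap unfolding infsum_eq_suminf_abs[OF rows] infsum_eq_suminf_abs[OF cols]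
      infsum_eq_suminf_abs[OF rows_sum] infsum_eq_suminf_abs[OF cols_sum] .
  show "summable (\<lambda>k. \<Sum>j. t j k)"
    by (rule summable_norm_cancel[OF cols_sum])
qed

lemma gbinomial_difference_sums:
  fixes a :: complex and x :: real
  assumes "x > 1"
  shows "(\<lambda>k. (a gchoose Suc k) * of_real x powr (a - of_nat (Suc k)) * (-1) ^ Suc k)
           sums (of_real (x - 1) powr a - of_real x powr a)"
proof -
  have "\<bar>-1\<bar> < \<bar>x\<bar>" using assms by simp
  from gen_binomial_complex''[OF this, of a]
  have "(\<lambda>k. (a gchoose k) * of_real x powr (a - of_nat k) * (-1) ^ k) sums (of_real (x - 1) powr a)"
    by simp
  hence "(\<lambda>k. (a gchoose k) * of_real x powr (a - of_nat k) * (-1) ^ k) sums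
           ((of_real (x - 1) powr a - of_real x powr a) + (a gchoose 0) * of_real x powr (a - of_nat 0) * (-1) ^ 0)"
    by simp
  thus ?thesis
    by (rule sums_Suc_iff[THEN iffD2])
qed

definition zeta_rec_coeff :: "nat \<Rightarrow> complex \<Rightarrow> complex" where
  "zeta_rec_coeff k s = ((1 - s) gchoose k) * (-1) ^ k"

lemma norm_zeta_rec_coeff_le:
  assumes "norm (1 - s) \<le> real A"
  shows "norm (zeta_rec_coeff k s) \<le> 2 ^ (A + k)"
  using norm_gbinomial_le[OF assms, of k] by (simp add: zeta_rec_coeff_def norm_mult norm_power)

lemma analytic_zeta_rec_coeff: "zeta_rec_coeff k analytic_on S"
  unfolding zeta_rec_coeff_def [abs_def] by (intro analytic_on_gbinomial analytic_intros)

lemma four_powr_minus_of_nat: "(4::real) powr (- real k) = (1 / 2) ^ k * (1 / 2) ^ k"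
  by (simp add: powr_minus powr_realpow power_one_over inverse_eq_divide flip: power_mult_distrib)

text \<open>The offset 4 makes \<open>(j + 4)\<^sup>-\<^sup>k\<close> beat the growth \<open>2\<^sup>k\<close> of the coefficients.\<close>
lemma norm_zeta_binomial_term_le:
  assumes "norm (1 - s) \<le> real A"
  shows "norm (zeta_rec_coeff (Suc k) s * inverse (of_nat (j + 4) powr (s + of_nat k)))
           \<le> real (j + 4) powr (- Re s) * (2 ^ (A + 1) * (1 / 2) ^ k)"
proof -
  have "norm (zeta_rec_coeff (Suc k) s * inverse (of_nat (j + 4) powr (s + of_nat k)))
          = norm (zeta_rec_coeff (Suc k) s) * (real (j + 4) powr (- Re s) * real (j + 4) powr (- real k))"
    unfolding norm_mult norm_inverse_of_nat_powr by (simp add: powr_add [symmetric])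
  also have "\<dots> \<le> 2 ^ (A + Suc k) * (real (j + 4) powr (- Re s) * 4 powr (- real k))"
    using norm_zeta_rec_coeff_le[OF assms, of "Suc k"]
    by (intro mult_mono mult_left_mono powr_mono2') auto
  also have "\<dots> = real (j + 4) powr (- Re s) * (2 ^ (A + 1) * (1 / 2) ^ k)"
    unfolding four_powr_minus_of_nat by (simp add: power_add power_one_over field_simps)
  finally show ?thesis .
qed

text \<open>Expanding \<open>(j + 3)\<^sup>1\<^sup>-\<^sup>s - (j + 4)\<^sup>1\<^sup>-\<^sup>s\<close> by the binomial series and summing over
  \<open>j\<close> telescopes to \<open>3\<^sup>1\<^sup>-\<^sup>s\<close>.\<close>
lemma zeta_tail_binomial_sums:
  assumes s: "Re s > 1"
  shows "(\<lambda>k. zeta_rec_coeff (Suc k) s * zeta_tail 4 (s + of_nat k)) sums 3 powr (1 - s)"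
proof -
  define a where "a = 1 - s"
  obtain A :: nat where A: "norm (1 - s) \<le> real A" using real_arch_simple by blast
  define t where "t = (\<lambda>j k::nat. zeta_rec_coeff (Suc k) s * inverse (of_nat (j + 4) powr (s + of_nat k)))"
  define g where "g = (\<lambda>j::nat. real (j + 4) powr (- Re s))"
  define h where "h = (\<lambda>k::nat. 2 ^ (A + 1) * (1 / 2 :: real) ^ k)"
  have g: "summable g" "\<And>j. g j \<ge> 0"
    using s summable_real_powr_shift[of "Re s" 4] by (auto simp: g_def)
  have h: "summable h" "\<And>k. h k \<ge> 0"
    by (auto simp: h_def intro!: summable_mult summable_geometric)
  have t_le: "norm (t j k) \<le> g j * h k" for j k
    unfolding t_def g_def h_def by (rule norm_zeta_binomial_term_le[OF A])
  have row: "(\<lambda>k. t j k) sums (of_nat (j + 3) powr a - of_nat (j + 4) powr a)" for j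
  proof -
    have "(a gchoose Suc k) * of_real (real (j + 4)) powr (a - of_nat (Suc k)) * (-1) ^ Suc k = t j k"
      for k
      by (simp add: t_def zeta_rec_coeff_def a_def powr_minus [symmetric] algebra_simps)
    with gbinomial_difference_sums[of "real (j + 4)" a] show ?thesis
      by (simp add: numeral_eq_Suc)
  qed
  have "(\<lambda>j. of_nat (j + 3) powr a - of_nat (Suc j + 3) powr a) sums (of_nat (0 + 3) powr a - 0)"
    by (intro telescope_sums' tendsto_neg_powr_complex_of_nat)
       (use s in \<open>auto simp: a_def filterlim_add_const_nat_at_top\<close>)
  hence "(\<lambda>j. \<Sum>k. t j k) sums 3 powr a"
    using row by (simp add: sums_iff add_ac)
  moreover have "(\<Sum>j. t j k) = zeta_rec_coeff (Suc k) s * zeta_tail 4 (s + of_nat k)" for k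
    unfolding t_def zeta_tail_def by (rule suminf_mult[OF summable_zeta_tail_terms]) (use s in simp)
  ultimately show ?thesis
    using suminf_swap_dominated[OF g h t_le] by (simp add: sums_iff a_def)
qed

lemma zeta_tail_recursion:
  assumes "Re s > 1"
  shows "(s - 1) * zeta_tail 4 s + (\<Sum>k. zeta_rec_coeff (k + 2) s * zeta_tail 4 (s + of_nat (k + 1)))
           = 3 powr (1 - s)"
proof -
  have "zeta_rec_coeff 1 s = s - 1" by (simp add: zeta_rec_coeff_def)
  with sums_split_initial_segment[OF zeta_tail_binomial_sums[OF assms], of 1]
  have "(\<lambda>k. zeta_rec_coeff (k + 2) s * zeta_tail 4 (s + of_nat (k + 1)))
          sums (3 powr (1 - s) - (s - 1) * zeta_tail 4 s)"
    by (simp add: add_ac)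
  thus ?thesis by (simp add: sums_iff)
qed

text \<open>The recursion solved for \<open>\<zeta>\<^sub>4(s)\<close>, applied \<open>d\<close> times; each application gains one
  unit of half-plane to the left.\<close>
primrec zeta_tail_cont :: "nat \<Rightarrow> complex \<Rightarrow> complex" where
  "zeta_tail_cont 0 = zeta_tail 4"
| "zeta_tail_cont (Suc d) = (\<lambda>s. (3 powr (1 - s)
      - (\<Sum>k. zeta_rec_coeff (k + 2) s * zeta_tail_cont d (s + of_nat (k + 1)))) / (s - 1))"

lemma zeta_tail_cont_eq: "Re s > 1 \<Longrightarrow> zeta_tail_cont d s = zeta_tail 4 s"
proof (induction d arbitrary: s)
  case 0 thus ?case by simp
next
  case (Suc d)
  have "(\<Sum>k. zeta_rec_coeff (k + 2) s * zeta_tail_cont d (s + of_nat (k + 1)))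
          = (\<Sum>k. zeta_rec_coeff (k + 2) s * zeta_tail 4 (s + of_nat (k + 1)))"
    using Suc by (intro suminf_cong) (subst Suc.IH, auto)
  also have "\<dots> = 3 powr (1 - s) - (s - 1) * zeta_tail 4 s"
    using zeta_tail_recursion[OF Suc.prems] by (simp add: algebra_simps)
  finally have sum_eq: "(\<Sum>k. zeta_rec_coeff (k + 2) s * zeta_tail_cont d (s + of_nat (k + 1)))
                          = 3 powr (1 - s) - (s - 1) * zeta_tail 4 s" .
  have "s - 1 \<noteq> 0" using Suc.prems by auto
  thus ?case by (simp only: zeta_tail_cont.simps sum_eq) simp
qed

definition zeta_rec_remainder :: "nat \<Rightarrow> complex \<Rightarrow> complex" where
  "zeta_rec_remainder K s = (\<Sum>k. zeta_rec_coeff (k + K + 2) s * zeta_tail 4 (s + of_nat (k + K + 1)))"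

definition zeta_rec_domain :: "nat \<Rightarrow> nat \<Rightarrow> complex set" where
  "zeta_rec_domain K A = {s. 3 / 2 - real K < Re s} \<inter> ball 1 (real A)"

lemma open_zeta_rec_domain: "open (zeta_rec_domain K A)"
  unfolding zeta_rec_domain_def by (intro open_Int open_halfspace_Re_gt open_ball)

lemma norm_zeta_rec_remainder_term_le:
  assumes "s \<in> zeta_rec_domain K A"
  shows "norm (zeta_rec_coeff (k + K + 2) s * zeta_tail 4 (s + of_nat (k + K + 1)))
           \<le> 2 ^ (A + K + 2) * real_zeta_tail 4 2 * (1 / 2) ^ k"
proof -
  have A: "norm (1 - s) \<le> real A" and re: "Re (s + of_nat (k + K + 1)) \<ge> 5 / 2 + real k"
    using assms by (auto simp: zeta_rec_domain_def dist_norm norm_minus_commute)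
  have c: "norm (zeta_rec_coeff (k + K + 2) s) \<le> 2 ^ (A + K + 2) * 2 ^ k"
    using norm_zeta_rec_coeff_le[OF A, of "k + K + 2"] by (simp add: power_add mult_ac)
  have "norm (zeta_tail 4 (s + of_nat (k + K + 1)))
          \<le> real_zeta_tail 4 2 * real 4 powr (2 - Re (s + of_nat (k + K + 1)))"
    by (rule norm_zeta_tail_le) (use re in auto)
  also have "\<dots> \<le> real_zeta_tail 4 2 * 4 powr (- real k)"
    by (intro mult_left_mono real_zeta_tail_nonneg powr_mono) (use re in auto)
  also note four_powr_minus_of_nat
  finally have z: "norm (zeta_tail 4 (s + of_nat (k + K + 1)))
                     \<le> real_zeta_tail 4 2 * ((1 / 2) ^ k * (1 / 2) ^ k)" .
  have "norm (zeta_rec_coeff (k + K + 2) s * zeta_tail 4 (s + of_nat (k + K + 1)))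
          \<le> (2 ^ (A + K + 2) * 2 ^ k) * (real_zeta_tail 4 2 * ((1 / 2) ^ k * (1 / 2) ^ k))"
    unfolding norm_mult by (intro mult_mono c z) auto
  also have "\<dots> = 2 ^ (A + K + 2) * real_zeta_tail 4 2 * (1 / 2) ^ k"
    by (simp add: power_one_over field_simps)
  finally show ?thesis .
qed

lemma summable_zeta_rec_remainder:
  assumes "s \<in> zeta_rec_domain K A"
  shows "summable (\<lambda>k. zeta_rec_coeff (k + K + 2) s * zeta_tail 4 (s + of_nat (k + K + 1)))"
  by (rule summable_comparison_test'[where g = "\<lambda>k. 2 ^ (A + K + 2) * real_zeta_tail 4 2 * (1 / 2) ^ k"])
     (use norm_zeta_rec_remainder_term_le[OF assms] in \<open>auto intro: summable_mult summable_geometric\<close>)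

lemma holomorphic_zeta_rec_remainder: "zeta_rec_remainder K holomorphic_on zeta_rec_domain K A"
  unfolding zeta_rec_remainder_def
proof (rule holomorphic_uniform_sequence[OF open_zeta_rec_domain])
  fix n
  show "(\<lambda>s. \<Sum>k<n. zeta_rec_coeff (k + K + 2) s * zeta_tail 4 (s + of_nat (k + K + 1)))
          holomorphic_on zeta_rec_domain K A"
    by (intro holomorphic_on_sum holomorphic_on_mult analytic_imp_holomorphic
        analytic_zeta_rec_coeff holomorphic_zeta_tail_shift) (auto simp: zeta_rec_domain_def)
next
  fix x assume "x \<in> zeta_rec_domain K A"
  then obtain d where d: "d > 0" "cball x d \<subseteq> zeta_rec_domain K A"
    using open_zeta_rec_domain open_contains_cball by blast
  have "uniform_limit (cball x d)
          (\<lambda>n s. \<Sum>k<n. zeta_rec_coeff (k + K + 2) s * zeta_tail 4 (s + of_nat (k + K + 1)))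
          (\<lambda>s. \<Sum>k. zeta_rec_coeff (k + K + 2) s * zeta_tail 4 (s + of_nat (k + K + 1))) sequentially"
    by (rule Weierstrass_m_test[where M = "\<lambda>k. 2 ^ (A + K + 2) * real_zeta_tail 4 2 * (1 / 2) ^ k"])
       (use d norm_zeta_rec_remainder_term_le in \<open>auto intro!: summable_mult summable_geometric\<close>)
  with d show "\<exists>d>0. cball x d \<subseteq> zeta_rec_domain K A \<and> uniform_limit (cball x d)
          (\<lambda>n s. \<Sum>k<n. zeta_rec_coeff (k + K + 2) s * zeta_tail 4 (s + of_nat (k + K + 1)))
          (\<lambda>s. \<Sum>k. zeta_rec_coeff (k + K + 2) s * zeta_tail 4 (s + of_nat (k + K + 1))) sequentially"
    by blast
qed

lemma zeta_tail_cont_Suc_eq_on_domain: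
  assumes "s \<in> zeta_rec_domain K A"
  shows "zeta_tail_cont (Suc d) s = (3 powr (1 - s)
           - ((\<Sum>k<K. zeta_rec_coeff (k + 2) s * zeta_tail_cont d (s + of_nat (k + 1)))
              + zeta_rec_remainder K s)) / (s - 1)"
proof -
  define f where "f = (\<lambda>k. zeta_rec_coeff (k + 2) s * zeta_tail_cont d (s + of_nat (k + 1)))"
  have shifted: "f (k + K) = zeta_rec_coeff (k + K + 2) s * zeta_tail 4 (s + of_nat (k + K + 1))" for k
  proof -
    have "Re (s + of_nat (k + K + 1)) > 1" using assms by (auto simp: zeta_rec_domain_def)
    thus ?thesis unfolding f_def by (simp add: zeta_tail_cont_eq)
  qed
  have "summable (\<lambda>k. f (k + K))"
    unfolding shifted by (rule summable_zeta_rec_remainder[OF assms])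
  hence "suminf f = (\<Sum>k. f (k + K)) + sum f {..<K}"
    by (intro suminf_split_initial_segment) (simp add: summable_iff_shift)
  also have "(\<Sum>k. f (k + K)) = zeta_rec_remainder K s"
    unfolding shifted zeta_rec_remainder_def ..
  finally show ?thesis unfolding zeta_tail_cont.simps f_def by simp
qed

lemma meromorphic_at_zeta_tail_cont_Suc:
  assumes IH: "zeta_tail_cont d meromorphic_on {s. Re s > 1 - real d}" and z: "Re z > - real d"
  shows "zeta_tail_cont (Suc d) meromorphic_on {z}"
proof -
  obtain K :: nat where K: "2 - Re z \<le> real K" using real_arch_simple by blast
  obtain A :: nat where A: "norm (1 - z) + 1 \<le> real A" using real_arch_simple by blast
  have zU: "z \<in> zeta_rec_domain K A"
    using K A by (auto simp: zeta_rec_domain_def dist_norm norm_minus_commute)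
  define G where "G = (\<lambda>s. (3 powr (1 - s)
    - ((\<Sum>k<K. zeta_rec_coeff (k + 2) s * zeta_tail_cont d (s + of_nat (k + 1)))
       + zeta_rec_remainder K s)) / (s - 1))"
  have shifted: "(\<lambda>s. zeta_tail_cont d (s + of_nat (k + 1))) meromorphic_on {z}" for k
    by (rule meromorphic_on_compose[OF IH]) (use z in \<open>auto intro!: analytic_intros\<close>)
  have remainder: "zeta_rec_remainder K analytic_on {z}"
  proof (rule analytic_on_subset)
    show "zeta_rec_remainder K analytic_on zeta_rec_domain K A"
      using holomorphic_zeta_rec_remainder open_zeta_rec_domain by (subst analytic_on_open) auto
  qed (use zU in auto)
  have coeff: "zeta_rec_coeff j meromorphic_on {z}" for j
    by (intro analytic_on_imp_meromorphic_on analytic_zeta_rec_coeff)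
  have power: "(\<lambda>s. (3::complex) powr (1 - s)) meromorphic_on {z}"
    by (intro analytic_on_imp_meromorphic_on analytic_on_powr)
       (auto intro!: analytic_intros simp: complex_nonpos_Reals_iff)
  have "G meromorphic_on {z}"
    unfolding G_def
    by (intro meromorphic_on_divide meromorphic_on_diff meromorphic_on_add meromorphic_on_sum
        meromorphic_on_mult shifted coeff power analytic_on_imp_meromorphic_on[OF remainder]
        meromorphic_on_id meromorphic_on_const)
  moreover have "eventually (\<lambda>s. zeta_tail_cont (Suc d) s = G s) (at z)"
    using eventually_at_in_open'[OF open_zeta_rec_domain zU]
    by eventually_elim (unfold G_def, rule zeta_tail_cont_Suc_eq_on_domain)
  ultimately show ?thesis
    by (subst meromorphic_on_cong[where g = G and B = "{z}"]) auto
qed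

lemma meromorphic_zeta_tail_cont: "zeta_tail_cont d meromorphic_on {s. Re s > 1 - real d}"
proof (induction d)
  case 0
  have "zeta_tail 4 analytic_on {s. Re s > 1}"
    using holomorphic_zeta_tail[of 4] by (subst analytic_on_open) (auto simp: open_halfspace_Re_gt)
  thus ?case by (auto intro: analytic_on_imp_meromorphic_on)
next
  case (Suc d)
  have "zeta_tail_cont (Suc d) meromorphic_on {z}" if "Re z > 1 - real (Suc d)" for z
    using that by (intro meromorphic_at_zeta_tail_cont_Suc[OF Suc.IH]) simp
  thus ?case by (subst meromorphic_on_meromorphic_at) auto
qed

lemma meromorphic_eq_cosparse_if_eq_on_open:
  assumes "f meromorphic_on A" "g meromorphic_on A" "open A" "connected A"
      and "open B" "b \<in> B" "B \<subseteq> A" "\<And>s. s \<in> B \<Longrightarrow> f s = g s"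
  shows "\<forall>\<^sub>\<approx>s\<in>A. f s = g s"
proof -
  have "(\<lambda>s. f s - g s) meromorphic_on A"
    using assms(1,2) by (rule meromorphic_on_diff)
  hence "(\<forall>\<^sub>\<approx>s\<in>A. f s - g s = 0) \<or> (\<forall>\<^sub>\<approx>s\<in>A. f s - g s \<noteq> 0)"
    using assms(3,4) by (rule meromorphic_imp_constant_or_avoid)
  moreover have "\<not> (\<forall>\<^sub>\<approx>s\<in>A. f s - g s \<noteq> 0)"
  proof
    assume "\<forall>\<^sub>\<approx>s\<in>A. f s - g s \<noteq> 0"
    hence "eventually (\<lambda>s. f s \<noteq> g s) (at b)"
      using assms(5-7) eventually_cosparse_imp_eventually_at[of _ A b UNIV] by auto
    moreover have "eventually (\<lambda>s. s \<in> B) (at b)"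
      by (rule eventually_at_in_open'[OF assms(5,6)])
    ultimately have "eventually (\<lambda>s. False) (at b)"
      by eventually_elim (use assms(8) in auto)
    thus False by (simp add: trivial_limit_at)
  qed
  ultimately show ?thesis by simp
qed

lemma zeta_tail_cont_eventually_eq:
  assumes "d \<le> d'" "Re z > 1 - real d"
  shows "eventually (\<lambda>s. zeta_tail_cont d' s = zeta_tail_cont d s) (at z)"
proof -
  let ?H = "{s. Re s > 1 - real d}"
  have "\<forall>\<^sub>\<approx>s\<in>?H. zeta_tail_cont d' s = zeta_tail_cont d s"
  proof (rule meromorphic_eq_cosparse_if_eq_on_open)
    show "zeta_tail_cont d' meromorphic_on ?H"
      by (rule meromorphic_on_subset[OF meromorphic_zeta_tail_cont]) (use assms in auto)
    show "connected ?H" by (rule convex_connected[OF convex_halfspace_Re_gt])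
    show "(2::complex) \<in> {s. Re s > 1}" by simp
  qed (auto simp: meromorphic_zeta_tail_cont open_halfspace_Re_gt zeta_tail_cont_eq)
  thus ?thesis
    using assms(2) by (simp add: eventually_cosparse_open_eq open_halfspace_Re_gt)
qed

definition zeta_cont_depth :: "complex \<Rightarrow> nat" where
  "zeta_cont_depth s = nat \<lceil>1 - Re s\<rceil> + 2"

lemma zeta_cont_depth_ge: "real (zeta_cont_depth s) \<ge> 3 - Re s"
  unfolding zeta_cont_depth_def by linarith

lemma zeta_cont_depth_near:
  assumes "dist s z < 1 / 2"
  shows "zeta_cont_depth s \<le> zeta_cont_depth z + 1" "Re z > 1 - real (zeta_cont_depth s)"
proof -
  have "\<bar>Re s - Re z\<bar> < 1 / 2"
    using abs_Re_le_cmod[of "s - z"] assms by (simp add: dist_norm)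
  thus "zeta_cont_depth s \<le> zeta_cont_depth z + 1" "Re z > 1 - real (zeta_cont_depth s)"
    using zeta_cont_depth_ge[of s] unfolding zeta_cont_depth_def by linarith+
qed

definition zeta_ext :: "complex \<Rightarrow> complex" where
  "zeta_ext s = 1 + inverse (2 powr s) + inverse (3 powr s) + zeta_tail_cont (zeta_cont_depth s) s"

lemma zeta_ext_eq_zeta_series:
  assumes "Re s > 1"
  shows "zeta_ext s = zeta_series s"
proof -
  have "zeta_series s = (\<Sum>j<3. inverse (of_nat (j + 1) powr s)) + zeta_tail (1 + 3) s"
    unfolding zeta_series_eq_zeta_tail by (rule zeta_tail_split[OF assms])
  moreover have "(\<Sum>j<3. inverse (of_nat (j + 1) powr s)) = 1 + inverse (2 powr s) + inverse (3 powr s)"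
    by (simp add: numeral_3_eq_3 lessThan_Suc)
  ultimately show ?thesis
    by (simp add: zeta_ext_def zeta_tail_cont_eq[OF assms])
qed

text \<open>Near \<open>z\<close>, all depths used in \<open>zeta_ext\<close> lie between values valid at \<open>z\<close>, and
  continuations of valid depths agree near \<open>z\<close>.\<close>
lemma meromorphic_zeta_ext: "zeta_ext meromorphic_on UNIV"
proof (subst meromorphic_on_meromorphic_at, intro ballI)
  fix z :: complex
  define d0 where "d0 = zeta_cont_depth z + 1"
  define G where "G = (\<lambda>s. 1 + inverse (2 powr s) + inverse (3 powr s) + zeta_tail_cont d0 s)"
  have "zeta_tail_cont d0 meromorphic_on {z}"
    by (rule meromorphic_on_subset[OF meromorphic_zeta_tail_cont])
       (use zeta_cont_depth_ge[of z] in \<open>auto simp: d0_def\<close>)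
  moreover have "(\<lambda>s. inverse ((c::complex) powr s)) meromorphic_on {z}" if "c \<in> {2, 3}" for c
    by (intro analytic_on_imp_meromorphic_on)
       (use that in \<open>auto intro!: analytic_intros simp: complex_nonpos_Reals_iff\<close>)
  ultimately have "G meromorphic_on {z}"
    unfolding G_def by (intro meromorphic_on_add meromorphic_on_const) auto
  moreover have "eventually (\<lambda>s. zeta_ext s = G s) (at z)"
  proof -
    have "eventually (\<lambda>s. \<forall>d\<in>{d. d \<le> d0 \<and> Re z > 1 - real d}.
            zeta_tail_cont d0 s = zeta_tail_cont d s) (at z)"
      by (rule eventually_ball_finite) (auto intro!: zeta_tail_cont_eventually_eq)
    moreover have "eventually (\<lambda>s. s \<in> ball z (1 / 2)) (at z)"
      by (rule eventually_at_in_open') auto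
    ultimately show ?thesis
    proof eventually_elim
      case (elim s)
      hence "zeta_cont_depth s \<le> d0" "Re z > 1 - real (zeta_cont_depth s)"
        using zeta_cont_depth_near[of s z] by (auto simp: d0_def dist_commute)
      with elim(1) show ?case by (simp add: zeta_ext_def G_def)
    qed
  qed
  ultimately show "zeta_ext meromorphic_on {z}"
    by (subst meromorphic_on_cong[where g = G and B = "{z}"]) auto
qed

section \<open>Absolute convergence of the product\<close>

definition multi_idx_size :: "nat \<Rightarrow> (nat \<Rightarrow> nat) \<Rightarrow> nat" where
  "multi_idx_size r n = (\<Sum>i<r. n i)"

lemma finite_idx_box: "finite (idx_box r N)"
  unfolding idx_box_def by (intro finite_PiE) auto

lemma idx_box_subset_multi_idx: "idx_box r N \<subseteq> multi_idx r"
  unfolding idx_box_def multi_idx_def by (intro PiE_mono) auto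

lemma idx_box_mono: "N \<le> M \<Longrightarrow> idx_box r N \<subseteq> idx_box r M"
  unfolding idx_box_def by (intro PiE_mono) auto

lemma sum_power_multi_idx_size_idx_box:
  fixes x :: real
  shows "(\<Sum>n\<in>idx_box r N. x ^ multi_idx_size r n) = (\<Sum>m<N. x ^ m) ^ r"
proof -
  have "(\<Prod>i<r. \<Sum>m<N. x ^ m) = (\<Sum>n\<in>PiE {..<r} (\<lambda>_. {..<N}). \<Prod>i<r. x ^ n i)"
    by (rule prod_sum_PiE) auto
  thus ?thesis
    unfolding idx_box_def multi_idx_size_def by (simp add: power_sum)
qed

lemma finite_subset_idx_box:
  assumes "finite F" "F \<subseteq> multi_idx r"
  shows "F \<subseteq> idx_box r (Suc (\<Sum>n\<in>F. multi_idx_size r n))"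
proof
  fix n assume n: "n \<in> F"
  have "n i < Suc (\<Sum>n\<in>F. multi_idx_size r n)" if "i < r" for i
  proof -
    have "n i \<le> multi_idx_size r n"
      unfolding multi_idx_size_def using that by (intro member_le_sum) auto
    also have "\<dots> \<le> (\<Sum>n\<in>F. multi_idx_size r n)"
      by (rule member_le_sum) (use n assms in auto)
    finally show ?thesis by simp
  qed
  thus "n \<in> idx_box r (Suc (\<Sum>n\<in>F. multi_idx_size r n))"
    using assms n unfolding idx_box_def multi_idx_def by (auto simp: PiE_iff)
qed

lemma sum_power_multi_idx_size_le:
  fixes x :: real
  assumes "0 \<le> x" "x < 1" "finite F" "F \<subseteq> multi_idx r"
  shows "(\<Sum>n\<in>F. x ^ multi_idx_size r n) \<le> (1 / (1 - x)) ^ r"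
proof -
  let ?M = "Suc (\<Sum>n\<in>F. multi_idx_size r n)"
  have "(\<Sum>n\<in>F. x ^ multi_idx_size r n) \<le> (\<Sum>n\<in>idx_box r ?M. x ^ multi_idx_size r n)"
    by (rule sum_mono2[OF finite_idx_box finite_subset_idx_box[OF assms(3,4)]]) (use assms in auto)
  also have "\<dots> = (\<Sum>m<?M. x ^ m) ^ r"
    by (rule sum_power_multi_idx_size_idx_box)
  also have "\<dots> \<le> (1 / (1 - x)) ^ r"
    using sum_gp_strict[of x ?M] assms
    by (intro power_mono sum_nonneg) (auto simp: divide_right_mono)
  finally show ?thesis .
qed

lemma multi_idx_size_ge_if_notin_idx_box:
  assumes "n \<in> multi_idx r" "n \<notin> idx_box r N"
  shows "multi_idx_size r n \<ge> N"
proof -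
  obtain i where i: "i < r" "n i \<ge> N"
    using assms unfolding multi_idx_def idx_box_def by (auto simp: PiE_iff not_less)
  have "n i \<le> multi_idx_size r n"
    unfolding multi_idx_size_def using i by (intro member_le_sum) auto
  with i show ?thesis by simp
qed

definition min_Re :: "complex list \<Rightarrow> real" where
  "min_Re vs = (if vs = [] then 1 else Min (Re ` set vs))"

text \<open>\<open>\<zeta>(w) - 1 = O(2\<^sup>-\<^sup>R\<^sup>e \<^sup>w)\<close> and \<open>Re w\<close> grows at least like \<open>min_Re vs\<close> times the size
  of the multi-index; one half of this decay pays for summing over all multi-indices, the other
  half bounds the factors outside a box.\<close>
definition decay_base :: "complex list \<Rightarrow> real" where
  "decay_base vs = 2 powr (- min_Re vs / 2)"

lemma min_Re_pos: "\<forall>v\<in>set vs. Re v > 0 \<Longrightarrow> min_Re vs > 0"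
  unfolding min_Re_def by auto

lemma min_Re_le: "i < length vs \<Longrightarrow> min_Re vs \<le> Re (vs ! i)"
  unfolding min_Re_def by (auto intro!: Min_le)

lemma decay_base_pos: "decay_base vs > 0"
  by (simp add: decay_base_def)

lemma decay_base_less_1: "\<forall>v\<in>set vs. Re v > 0 \<Longrightarrow> decay_base vs < 1"
  using min_Re_pos[of vs] unfolding decay_base_def by (simp add: powr_less_one)

lemma Z_factor_minus_one:
  assumes "Re (s + (\<Sum>i<length vs. of_nat (n i) * vs ! i)) > 1"
  shows "Z_factor vs s n - 1 = zeta_tail 2 (s + (\<Sum>i<length vs. of_nat (n i) * vs ! i))"
  using zeta_tail_split[OF assms, of 1 1]
  unfolding Z_factor_def zeta_series_eq_zeta_tail by (simp add: numeral_2_eq_2)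

lemma Re_Z_factor_arg_ge:
  assumes "\<forall>v\<in>set vs. Re v > 0"
  shows "Re (s + (\<Sum>i<length vs. of_nat (n i) * vs ! i))
           \<ge> Re s + min_Re vs * real (multi_idx_size (length vs) n)"
proof -
  have "min_Re vs * real (multi_idx_size (length vs) n) = (\<Sum>i<length vs. real (n i) * min_Re vs)"
    unfolding multi_idx_size_def by (simp add: sum_distrib_left mult.commute)
  also have "\<dots> \<le> (\<Sum>i<length vs. real (n i) * Re (vs ! i))"
    by (intro sum_mono mult_left_mono min_Re_le) auto
  also have "\<dots> = Re (\<Sum>i<length vs. of_nat (n i) * vs ! i)" by (simp add: Re_sum)
  finally show ?thesis by simp
qed

lemma norm_Z_factor_minus_one_le:
  assumes pos: "\<forall>v\<in>set vs. Re v > 0" and \<sigma>: "1 < \<sigma>" "\<sigma> \<le> Re s"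
  shows "norm (Z_factor vs s n - 1) \<le> real_zeta_tail 2 \<sigma> * 2 powr (\<sigma> - Re s)
           * (decay_base vs ^ multi_idx_size (length vs) n * decay_base vs ^ multi_idx_size (length vs) n)"
proof -
  define w where "w = s + (\<Sum>i<length vs. of_nat (n i) * vs ! i)"
  define k where "k = multi_idx_size (length vs) n"
  define c where "c = min_Re vs"
  have ck: "c * real k \<ge> 0" using min_Re_pos[OF pos] by (simp add: c_def)
  have rw: "Re w \<ge> Re s + c * real k"
    using Re_Z_factor_arg_ge[OF pos, of s n] by (simp add: w_def c_def k_def)
  hence "Z_factor vs s n - 1 = zeta_tail 2 w"
    unfolding w_def using ck \<sigma> by (intro Z_factor_minus_one) (simp add: w_def)
  hence "norm (Z_factor vs s n - 1) \<le> real_zeta_tail 2 \<sigma> * 2 powr (\<sigma> - Re w)"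
    using norm_zeta_tail_le[of 2 \<sigma> w] \<sigma> rw ck by simp
  also have "(2::real) powr (\<sigma> - Re w) \<le> 2 powr (\<sigma> - Re s - c * real k)"
    using rw by (intro powr_mono) auto
  also have "2 powr (\<sigma> - Re s - c * real k) = 2 powr (\<sigma> - Re s) * (decay_base vs ^ k * decay_base vs ^ k)"
  proof -
    have "decay_base vs ^ k = 2 powr (- c / 2 * real k)"
      unfolding decay_base_def c_def by (simp add: powr_realpow [symmetric] powr_powr)
    hence "decay_base vs ^ k * decay_base vs ^ k = 2 powr (- c * real k)"
      by (simp add: powr_add [symmetric])
    thus ?thesis by (simp add: powr_add [symmetric])
  qed
  finally show ?thesis
    using real_zeta_tail_nonneg[of \<sigma> 2] \<sigma> by (simp add: k_def mult_left_mono mult.assoc)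
qed

lemma norm_prod_one_plus_minus_one_le:
  fixes f :: "'b \<Rightarrow> 'a::{real_normed_div_algebra, comm_ring_1}"
  shows "norm (prod (\<lambda>n. 1 + f n) A - 1) \<le> prod (\<lambda>n. 1 + norm (f n)) A - 1"
proof (induction A rule: infinite_finite_induct)
  case (insert x A)
  from insert.hyps have
    "norm ((\<Prod>n\<in>insert x A. 1 + f n) - 1)
       = norm ((\<Prod>n\<in>A. 1 + f n) - 1 + f x * (\<Prod>n\<in>A. 1 + f n))"
    by (simp add: algebra_simps)
  also have "\<dots> \<le> norm ((\<Prod>n\<in>A. 1 + f n) - 1) + norm (f x) * (\<Prod>n\<in>A. norm (1 + f n))"
    using norm_triangle_ineq[of "(\<Prod>n\<in>A. 1 + f n) - 1" "f x * (\<Prod>n\<in>A. 1 + f n)"]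
    by (simp add: prod_norm norm_mult)
  also have "(\<Prod>n\<in>A. norm (1 + f n)) \<le> (\<Prod>n\<in>A. 1 + norm (f n))"
    by (intro prod_mono conjI) (auto intro: order.trans[OF norm_triangle_ineq])
  also note insert.IH
  also have "(\<Prod>n\<in>A. 1 + norm (f n)) - 1 + norm (f x) * (\<Prod>n\<in>A. 1 + norm (f n))
               = (\<Prod>n\<in>insert x A. 1 + norm (f n)) - 1"
    using insert.hyps by (simp add: algebra_simps)
  finally show ?case by (simp_all add: mult_left_mono)
qed simp_all

lemma norm_prod_one_plus_le_exp:
  fixes f :: "'b \<Rightarrow> 'a::{real_normed_div_algebra, comm_ring_1}"
  shows "norm (prod (\<lambda>n. 1 + f n) A) \<le> exp (sum (\<lambda>n. norm (f n)) A)"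
proof -
  have "norm (prod (\<lambda>n. 1 + f n) A) = prod (\<lambda>n. norm (1 + f n)) A" by (simp add: prod_norm)
  also have "\<dots> \<le> prod (\<lambda>n. 1 + norm (f n)) A"
    by (intro prod_mono conjI) (auto intro: order.trans[OF norm_triangle_ineq])
  also have "\<dots> \<le> exp (sum (\<lambda>n. norm (f n)) A)" by (rule prod_le_exp_sum) auto
  finally show ?thesis .
qed

lemma norm_prod_one_plus_minus_one_le_exp:
  fixes f :: "'b \<Rightarrow> 'a::{real_normed_div_algebra, comm_ring_1}"
  shows "norm (prod (\<lambda>n. 1 + f n) A - 1) \<le> exp (sum (\<lambda>n. norm (f n)) A) - 1"
  using norm_prod_one_plus_minus_one_le[of f A] prod_le_exp_sum[of A "\<lambda>n. norm (f n)"] by simp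

lemma norm_prod_one_plus_diff_le:
  fixes f :: "'b \<Rightarrow> 'a::{real_normed_div_algebra, comm_ring_1}"
  assumes "finite G" "F \<subseteq> G"
  shows "norm (prod (\<lambda>n. 1 + f n) G - prod (\<lambda>n. 1 + f n) F)
           \<le> exp (sum (\<lambda>n. norm (f n)) F) * (exp (sum (\<lambda>n. norm (f n)) (G - F)) - 1)"
proof -
  have "prod (\<lambda>n. 1 + f n) G = prod (\<lambda>n. 1 + f n) F * prod (\<lambda>n. 1 + f n) (G - F)"
    using prod.subset_diff[OF assms(2,1)] by (simp add: mult.commute)
  hence "norm (prod (\<lambda>n. 1 + f n) G - prod (\<lambda>n. 1 + f n) F)
           = norm (prod (\<lambda>n. 1 + f n) F) * norm (prod (\<lambda>n. 1 + f n) (G - F) - 1)"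
    by (simp add: algebra_simps flip: norm_mult)
  also have "\<dots> \<le> exp (sum (\<lambda>n. norm (f n)) F) * (exp (sum (\<lambda>n. norm (f n)) (G - F)) - 1)"
    by (intro mult_mono norm_prod_one_plus_le_exp norm_prod_one_plus_minus_one_le_exp) auto
  finally show ?thesis .
qed

definition Z_sum_bound :: "complex list \<Rightarrow> real \<Rightarrow> real" where
  "Z_sum_bound vs \<sigma> = real_zeta_tail 2 \<sigma> * (1 / (1 - decay_base vs)) ^ length vs"

lemma Z_sum_bound_nonneg: "\<forall>v\<in>set vs. Re v > 0 \<Longrightarrow> 1 < \<sigma> \<Longrightarrow> Z_sum_bound vs \<sigma> \<ge> 0"
  unfolding Z_sum_bound_def using decay_base_less_1[of vs]
  by (intro mult_nonneg_nonneg real_zeta_tail_nonneg zero_le_power) auto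

lemma sum_norm_Z_factor_minus_one_le:
  assumes pos: "\<forall>v\<in>set vs. Re v > 0" and \<sigma>: "1 < \<sigma>" "\<sigma> \<le> Re s"
      and F: "finite F" "F \<subseteq> multi_idx (length vs)"
  shows "(\<Sum>n\<in>F. norm (Z_factor vs s n - 1)) \<le> Z_sum_bound vs \<sigma> * 2 powr (\<sigma> - Re s)"
proof -
  define y where "y = decay_base vs"
  define r where "r = length vs"
  define C where "C = real_zeta_tail 2 \<sigma> * 2 powr (\<sigma> - Re s)"
  have y: "0 < y" "y < 1" using decay_base_pos decay_base_less_1[OF pos] by (auto simp: y_def)
  have C: "C \<ge> 0" using real_zeta_tail_nonneg[of \<sigma> 2] \<sigma> by (simp add: C_def)
  have "(\<Sum>n\<in>F. norm (Z_factor vs s n - 1)) \<le> (\<Sum>n\<in>F. C * (y ^ multi_idx_size r n * y ^ multi_idx_size r n))"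
    using norm_Z_factor_minus_one_le[OF pos \<sigma>] by (intro sum_mono) (simp add: C_def y_def r_def)
  also have "\<dots> \<le> (\<Sum>n\<in>F. C * y ^ multi_idx_size r n)"
    using y by (intro sum_mono mult_left_mono C mult_left_le power_le_one) auto
  also have "\<dots> \<le> C * (1 / (1 - y)) ^ r"
    unfolding sum_distrib_left [symmetric] using y F
    by (intro mult_left_mono C sum_power_multi_idx_size_le) (auto simp: r_def)
  finally show ?thesis by (simp add: Z_sum_bound_def C_def y_def r_def mult_ac)
qed

lemma sum_norm_Z_factor_minus_one_outside_le:
  assumes pos: "\<forall>v\<in>set vs. Re v > 0" and \<sigma>: "1 < \<sigma>" "\<sigma> \<le> Re s"
      and F: "finite F" "F \<subseteq> multi_idx (length vs)" "F \<inter> idx_box (length vs) N = {}"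
  shows "(\<Sum>n\<in>F. norm (Z_factor vs s n - 1)) \<le> Z_sum_bound vs \<sigma> * decay_base vs ^ N"
proof -
  define y where "y = decay_base vs"
  define r where "r = length vs"
  define C where "C = real_zeta_tail 2 \<sigma>"
  have y: "0 < y" "y < 1" using decay_base_pos decay_base_less_1[OF pos] by (auto simp: y_def)
  have C: "C \<ge> 0" using real_zeta_tail_nonneg[of \<sigma> 2] \<sigma> by (simp add: C_def)
  have "norm (Z_factor vs s n - 1) \<le> C * (y ^ N * y ^ multi_idx_size r n)" if n: "n \<in> F" for n
  proof -
    have "N \<le> multi_idx_size r n"
      using n F by (intro multi_idx_size_ge_if_notin_idx_box) (auto simp: r_def)
    hence "y ^ multi_idx_size r n \<le> y ^ N" using y by (intro power_decreasing) auto
    moreover have "2 powr (\<sigma> - Re s) \<le> 1" using powr_mono[of "\<sigma> - Re s" 0 2] \<sigma> by simp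
    ultimately show ?thesis
      using norm_Z_factor_minus_one_le[OF pos \<sigma>, of n] y C
      by (elim order.trans) (auto simp: C_def y_def r_def intro!: mult_mono mult_left_le)
  qed
  hence "(\<Sum>n\<in>F. norm (Z_factor vs s n - 1)) \<le> (\<Sum>n\<in>F. C * y ^ N * y ^ multi_idx_size r n)"
    by (intro sum_mono) (simp add: mult.assoc)
  also have "\<dots> = C * y ^ N * (\<Sum>n\<in>F. y ^ multi_idx_size r n)"
    by (simp add: sum_distrib_left)
  also have "\<dots> \<le> C * y ^ N * (1 / (1 - y)) ^ r"
    using y F C by (intro mult_left_mono sum_power_multi_idx_size_le) (auto simp: r_def)
  finally show ?thesis by (simp add: Z_sum_bound_def C_def y_def r_def mult_ac)
qed

definition Z_tail_bound :: "complex list \<Rightarrow> real \<Rightarrow> nat \<Rightarrow> real" where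
  "Z_tail_bound vs \<sigma> N = exp (Z_sum_bound vs \<sigma>) * (exp (Z_sum_bound vs \<sigma> * decay_base vs ^ N) - 1)"

lemma Z_tail_bound_tendsto_0:
  assumes "\<forall>v\<in>set vs. Re v > 0"
  shows "Z_tail_bound vs \<sigma> \<longlonglongrightarrow> 0"
proof -
  have "norm (decay_base vs) < 1"
    using decay_base_pos[of vs] decay_base_less_1[OF assms] by simp
  hence "(\<lambda>N. decay_base vs ^ N) \<longlonglongrightarrow> 0" by (rule LIMSEQ_power_zero)
  hence "(\<lambda>N. exp (Z_sum_bound vs \<sigma>) * (exp (Z_sum_bound vs \<sigma> * decay_base vs ^ N) - 1))
           \<longlonglongrightarrow> exp (Z_sum_bound vs \<sigma>) * (exp (Z_sum_bound vs \<sigma> * 0) - 1)"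
    by (intro tendsto_mult tendsto_diff tendsto_exp tendsto_const)
  thus ?thesis unfolding Z_tail_bound_def [abs_def] by simp
qed

lemma norm_prod_Z_factor_minus_Z_partial_le:
  assumes pos: "\<forall>v\<in>set vs. Re v > 0" and \<sigma>: "1 < \<sigma>" "\<sigma> \<le> Re s"
      and G: "finite G" "idx_box (length vs) N \<subseteq> G" "G \<subseteq> multi_idx (length vs)"
  shows "norm ((\<Prod>n\<in>G. Z_factor vs s n) - Z_partial vs s N) \<le> Z_tail_bound vs \<sigma> N"
proof -
  let ?f = "\<lambda>n. Z_factor vs s n - 1"
  let ?B = "idx_box (length vs) N"
  have "norm ((\<Prod>n\<in>G. 1 + ?f n) - (\<Prod>n\<in>?B. 1 + ?f n))
          \<le> exp (sum (\<lambda>n. norm (?f n)) ?B) * (exp (sum (\<lambda>n. norm (?f n)) (G - ?B)) - 1)"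
    by (rule norm_prod_one_plus_diff_le[OF G(1,2)])
  also have "\<dots> \<le> Z_tail_bound vs \<sigma> N"
    unfolding Z_tail_bound_def
  proof (intro mult_mono)
    have "sum (\<lambda>n. norm (?f n)) ?B \<le> Z_sum_bound vs \<sigma> * 2 powr (\<sigma> - Re s)"
      by (rule sum_norm_Z_factor_minus_one_le[OF pos \<sigma> finite_idx_box idx_box_subset_multi_idx])
    also have "\<dots> \<le> Z_sum_bound vs \<sigma>"
      using Z_sum_bound_nonneg[OF pos \<sigma>(1)] powr_mono[of "\<sigma> - Re s" 0 2] \<sigma>
      by (intro mult_left_le) auto
    finally show "exp (sum (\<lambda>n. norm (?f n)) ?B) \<le> exp (Z_sum_bound vs \<sigma>)" by simp
    have "sum (\<lambda>n. norm (?f n)) (G - ?B) \<le> Z_sum_bound vs \<sigma> * decay_base vs ^ N"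
      by (rule sum_norm_Z_factor_minus_one_outside_le[OF pos \<sigma>]) (use G in auto)
    thus "exp (sum (\<lambda>n. norm (?f n)) (G - ?B)) - 1 \<le> exp (Z_sum_bound vs \<sigma> * decay_base vs ^ N) - 1"
      by simp
  qed (auto simp: sum_nonneg)
  finally show ?thesis by (simp add: Z_partial_def)
qed

lemma Z_partial_tendsto:
  assumes pos: "\<forall>v\<in>set vs. Re v > 0" and s: "Re s > 1"
  shows "Z_partial vs s \<longlonglongrightarrow> Z_prod vs s"
proof -
  have bound: "dist (Z_partial vs s M) (Z_partial vs s N) \<le> Z_tail_bound vs (Re s) N" if "N \<le> M" for N M
    using norm_prod_Z_factor_minus_Z_partial_le[OF pos s order.refl finite_idx_box
        idx_box_mono[OF that] idx_box_subset_multi_idx]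
    by (simp add: Z_partial_def dist_norm)
  have "Cauchy (Z_partial vs s)"
  proof (rule CauchyI)
    fix e :: real assume "e > 0"
    then obtain M where M: "\<And>N. N \<ge> M \<Longrightarrow> Z_tail_bound vs (Re s) N < e"
      using order_tendstoD(2)[OF Z_tail_bound_tendsto_0[OF pos]] unfolding eventually_sequentially
      by blast
    have "norm (Z_partial vs s m - Z_partial vs s n) < e" if "m \<ge> M" "n \<ge> M" for m n
      using bound[of m n] bound[of n m] M[OF that(1)] M[OF that(2)]
      by (cases "n \<le> m") (auto simp: dist_norm norm_minus_commute)
    thus "\<exists>M. \<forall>m\<ge>M. \<forall>n\<ge>M. norm (Z_partial vs s m - Z_partial vs s n) < e" by blast
  qed
  thus ?thesis unfolding Z_prod_def by (simp add: Cauchy_convergent_iff convergent_LIMSEQ_iff)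
qed

lemma norm_Z_prod_minus_Z_partial_le:
  assumes pos: "\<forall>v\<in>set vs. Re v > 0" and \<sigma>: "1 < \<sigma>" "\<sigma> \<le> Re s"
  shows "norm (Z_prod vs s - Z_partial vs s N) \<le> Z_tail_bound vs \<sigma> N"
proof (rule tendsto_le[OF trivial_limit_sequentially tendsto_const])
  show "(\<lambda>M. norm (Z_partial vs s M - Z_partial vs s N)) \<longlonglongrightarrow> norm (Z_prod vs s - Z_partial vs s N)"
    using Z_partial_tendsto[OF pos] \<sigma> by (intro tendsto_intros) auto
  show "eventually (\<lambda>M. norm (Z_partial vs s M - Z_partial vs s N) \<le> Z_tail_bound vs \<sigma> N) sequentially"
    using eventually_ge_at_top[of N]
  proof eventually_elim
    case (elim M)
    show ?case
      using norm_prod_Z_factor_minus_Z_partial_le[OF pos \<sigma> finite_idx_box idx_box_mono[OF elim]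
          idx_box_subset_multi_idx]
      by (simp add: Z_partial_def)
  qed
qed

lemma Z_prod_tendsto_exhaustion:
  assumes pos: "\<forall>v\<in>set vs. Re v > 0" and s: "Re s > 1"
      and A: "\<And>N. finite (A N)" "\<And>N. idx_box (length vs) (g N) \<subseteq> A N"
             "\<And>N. A N \<subseteq> multi_idx (length vs)"
      and g: "filterlim g at_top sequentially"
  shows "(\<lambda>N. \<Prod>n\<in>A N. Z_factor vs s n) \<longlonglongrightarrow> Z_prod vs s"
proof -
  have "(\<lambda>N. (\<Prod>n\<in>A N. Z_factor vs s n) - Z_partial vs s (g N)) \<longlonglongrightarrow> 0"
  proof (rule Lim_null_comparison)
    show "eventually (\<lambda>N. norm ((\<Prod>n\<in>A N. Z_factor vs s n) - Z_partial vs s (g N))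
            \<le> Z_tail_bound vs (Re s) (g N)) sequentially"
      using s by (intro always_eventually allI norm_prod_Z_factor_minus_Z_partial_le[OF pos] A) auto
    show "(\<lambda>N. Z_tail_bound vs (Re s) (g N)) \<longlonglongrightarrow> 0"
      by (rule filterlim_compose[OF Z_tail_bound_tendsto_0[OF pos] g])
  qed
  moreover have "(\<lambda>N. Z_partial vs s (g N)) \<longlonglongrightarrow> Z_prod vs s"
    by (rule filterlim_compose[OF Z_partial_tendsto[OF pos s] g])
  ultimately have "(\<lambda>N. ((\<Prod>n\<in>A N. Z_factor vs s n) - Z_partial vs s (g N)) + Z_partial vs s (g N))
                     \<longlonglongrightarrow> 0 + Z_prod vs s"
    by (rule tendsto_add)
  thus ?thesis by simp
qed

lemma abs_summable_Z_factor_minus_one: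
  assumes pos: "\<forall>v\<in>set vs. Re v > 0" and s: "Re s > 1"
  shows "(\<lambda>n. norm (Z_factor vs s n - 1)) summable_on multi_idx (length vs)"
proof (rule nonneg_bdd_above_summable_on)
  show "bdd_above (sum (\<lambda>n. norm (Z_factor vs s n - 1)) ` {F. F \<subseteq> multi_idx (length vs) \<and> finite F})"
    using sum_norm_Z_factor_minus_one_le[OF pos s order.refl] by (intro bdd_aboveI2) auto
qed auto

lemma holomorphic_Z_factor:
  assumes pos: "\<forall>v\<in>set vs. Re v > 0"
  shows "(\<lambda>s. Z_factor vs s n) holomorphic_on {s. Re s > 1}"
  unfolding Z_factor_def zeta_series_eq_zeta_tail
proof (rule holomorphic_zeta_tail_shift)
  fix s :: complex assume "s \<in> {s. Re s > 1}"
  moreover have "min_Re vs * real (multi_idx_size (length vs) n) \<ge> 0"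
    using min_Re_pos[OF pos] by simp
  ultimately show "Re (s + (\<Sum>i<length vs. of_nat (n i) * vs ! i)) > 1"
    using Re_Z_factor_arg_ge[OF pos, of s n] by simp
qed auto

lemma holomorphic_Z_prod:
  assumes pos: "\<forall>v\<in>set vs. Re v > 0"
  shows "Z_prod vs holomorphic_on {s. Re s > 1}"
proof (rule holomorphic_on_Re_gt_uniform_limit[where f = "\<lambda>N s. Z_partial vs s N"])
  show "(\<lambda>s. Z_partial vs s N) holomorphic_on {s. Re s > 1}" for N
    unfolding Z_partial_def by (intro holomorphic_on_prod holomorphic_Z_factor pos)
next
  fix d :: real assume d: "d > 0"
  show "uniform_limit {s. Re s \<ge> 1 + d} (\<lambda>N s. Z_partial vs s N) (Z_prod vs) sequentially"
  proof (rule uniform_limitI)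
    fix e :: real assume "e > 0"
    with Z_tail_bound_tendsto_0[OF pos, of "1 + d"]
    have "eventually (\<lambda>N. Z_tail_bound vs (1 + d) N < e) sequentially"
      by (rule order_tendstoD)
    thus "eventually (\<lambda>N. \<forall>s\<in>{s. Re s \<ge> 1 + d}. dist (Z_partial vs s N) (Z_prod vs s) < e) sequentially"
    proof eventually_elim
      case (elim N)
      show ?case
      proof
        fix s assume "s \<in> {s. Re s \<ge> 1 + d}"
        hence "norm (Z_prod vs s - Z_partial vs s N) \<le> Z_tail_bound vs (1 + d) N"
          using d by (intro norm_Z_prod_minus_Z_partial_le pos) auto
        with elim show "dist (Z_partial vs s N) (Z_prod vs s) < e"
          by (simp add: dist_norm norm_minus_commute)
      qed
    qed
  qed
qed

lemma norm_Z_partial_minus_one_le: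
  assumes pos: "\<forall>v\<in>set vs. Re v > 0" and s: "Re s \<ge> 2"
  shows "norm (Z_partial vs s N - 1) \<le> exp (Z_sum_bound vs 2 * 2 powr (2 - Re s)) - 1"
proof -
  have "norm (Z_partial vs s N - 1)
          = norm ((\<Prod>n\<in>idx_box (length vs) N. 1 + (Z_factor vs s n - 1)) - 1)"
    by (simp add: Z_partial_def)
  also have "\<dots> \<le> exp (\<Sum>n\<in>idx_box (length vs) N. norm (Z_factor vs s n - 1)) - 1"
    by (rule norm_prod_one_plus_minus_one_le_exp)
  also have "\<dots> \<le> exp (Z_sum_bound vs 2 * 2 powr (2 - Re s)) - 1"
    using sum_norm_Z_factor_minus_one_le[OF pos _ s finite_idx_box idx_box_subset_multi_idx] by simp
  finally show ?thesis .
qed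

lemma Z_prod_nonzero_right_half_plane:
  assumes pos: "\<forall>v\<in>set vs. Re v > 0"
  shows "\<exists>R\<ge>2. \<forall>s. Re s \<ge> R \<longrightarrow> Z_prod vs s \<noteq> 0"
proof -
  define K where "K = Z_sum_bound vs 2"
  have K: "K \<ge> 0" using Z_sum_bound_nonneg[OF pos, of 2] by (simp add: K_def)
  define R where "R = 2 + log 2 (2 * (K + 1))"
  have R: "R \<ge> 2" using K by (simp add: R_def)
  have "Z_prod vs s \<noteq> 0" if s: "Re s \<ge> R" for s
  proof -
    have s2: "Re s \<ge> 2" using s R by simp
    have "2 powr (2 - Re s) \<le> 2 powr (- log 2 (2 * (K + 1)))"
      using s by (intro powr_mono) (auto simp: R_def)
    also have "\<dots> = inverse (2 * (K + 1))"
      using K by (simp add: powr_minus powr_log_cancel)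
    finally have "K * 2 powr (2 - Re s) \<le> K * inverse (2 * (K + 1))"
      using K by (rule mult_left_mono)
    also have "\<dots> \<le> 1 / 2" using K by (simp add: field_simps)
    finally have "exp (K * 2 powr (2 - Re s)) - 1 \<le> exp (1 / 2) - 1" by simp
    also have "exp (1 / 2 :: real) \<le> 1 + 1 / 2 + (1 / 2) ^ 2" by (rule exp_bound) auto
    finally have "norm (Z_partial vs s N - 1) \<le> 3 / 4" for N
      using norm_Z_partial_minus_one_le[OF pos s2, of N] by (simp add: K_def power2_eq_square)
    hence "norm (Z_prod vs s - 1) \<le> 3 / 4"
      using Z_partial_tendsto[OF pos] s2
      by (intro tendsto_le[OF trivial_limit_sequentially tendsto_const, of "\<lambda>N. norm (Z_partial vs s N - 1)"])
         (auto intro!: tendsto_intros)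
    thus ?thesis by auto
  qed
  with R show ?thesis by blast
qed

section \<open>The shift relation\<close>

lemma Z_factor_snoc_zero:
  "Z_factor (vs @ [a]) s (m(length vs := 0)) = Z_factor vs s m"
proof -
  have "(\<Sum>i<length vs. of_nat ((m(length vs := 0)) i) * (vs @ [a]) ! i)
          = (\<Sum>i<length vs. of_nat (m i) * vs ! i)"
    by (intro sum.cong) (auto simp: nth_append)
  thus ?thesis unfolding Z_factor_def by simp
qed

lemma Z_factor_snoc_Suc:
  "Z_factor (vs @ [a]) s (m(length vs := Suc (m (length vs)))) = Z_factor (vs @ [a]) (s + a) m"
proof -
  have "(\<Sum>i<length vs. of_nat ((m(length vs := k)) i) * (vs @ [a]) ! i)
          = (\<Sum>i<length vs. of_nat (m i) * vs ! i)" for k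
    by (intro sum.cong) (auto simp: nth_append)
  from this[of "Suc (m (length vs))"] this[of "m (length vs)"]
  show ?thesis unfolding Z_factor_def by (simp add: algebra_simps)
qed

definition idx_box_short_last :: "nat \<Rightarrow> nat \<Rightarrow> (nat \<Rightarrow> nat) set" where
  "idx_box_short_last r N = PiE {..<Suc r} (\<lambda>i. if i < r then {..<N} else {..<N - 1})"

lemma prod_idx_box_last_zero:
  assumes "N \<ge> 1"
  shows "(\<Prod>n\<in>idx_box (Suc (length vs)) N \<inter> {n. n (length vs) = 0}. Z_factor (vs @ [a]) s n)
           = Z_partial vs s N"
  unfolding Z_partial_def
proof (rule prod.reindex_bij_witness[where i = "\<lambda>n. n(length vs := undefined)"
      and j = "\<lambda>n. n(length vs := 0)", symmetric])
  fix m assume m: "m \<in> idx_box (length vs) N"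
  hence "m (length vs) = undefined" by (auto simp: idx_box_def PiE_iff extensional_def)
  thus "(m(length vs := 0))(length vs := undefined) = m" by auto
  show "m(length vs := 0) \<in> idx_box (Suc (length vs)) N \<inter> {n. n (length vs) = 0}"
    using m assms by (auto simp: idx_box_def PiE_iff extensional_def)
  show "Z_factor (vs @ [a]) s (m(length vs := 0)) = Z_factor vs s m"
    by (rule Z_factor_snoc_zero)
next
  fix n assume n: "n \<in> idx_box (Suc (length vs)) N \<inter> {n. n (length vs) = 0}"
  thus "(n(length vs := undefined))(length vs := 0) = n" by auto
  show "n(length vs := undefined) \<in> idx_box (length vs) N"
    using n by (auto simp: idx_box_def PiE_iff extensional_def)
qed

lemma prod_idx_box_last_pos:
  "(\<Prod>n\<in>idx_box (Suc (length vs)) N - {n. n (length vs) = 0}. Z_factor (vs @ [a]) s n)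
     = (\<Prod>m\<in>idx_box_short_last (length vs) N. Z_factor (vs @ [a]) (s + a) m)"
proof (rule prod.reindex_bij_witness[where i = "\<lambda>n. n(length vs := n (length vs) - 1)"
      and j = "\<lambda>m. m(length vs := Suc (m (length vs)))", symmetric])
  fix m assume m: "m \<in> idx_box_short_last (length vs) N"
  show "(m(length vs := Suc (m (length vs))))(length vs := (m(length vs := Suc (m (length vs)))) (length vs) - 1) = m"
    by auto
  show "m(length vs := Suc (m (length vs))) \<in> idx_box (Suc (length vs)) N - {n. n (length vs) = 0}"
    using m by (auto simp: idx_box_def idx_box_short_last_def PiE_iff extensional_def split: if_splits)
  show "Z_factor (vs @ [a]) s (m(length vs := Suc (m (length vs)))) = Z_factor (vs @ [a]) (s + a) m"
    by (rule Z_factor_snoc_Suc)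
next
  fix n assume n: "n \<in> idx_box (Suc (length vs)) N - {n. n (length vs) = 0}"
  thus "(n(length vs := n (length vs) - 1))(length vs := Suc ((n(length vs := n (length vs) - 1)) (length vs))) = n"
    by auto
  have "n (length vs) < N" "n (length vs) \<noteq> 0" "\<forall>i<length vs. n i < N"
       "\<forall>i. i > length vs \<longrightarrow> n i = undefined"
    using n by (auto simp: idx_box_def PiE_iff extensional_def)
  thus "n(length vs := n (length vs) - 1) \<in> idx_box_short_last (length vs) N"
    by (auto simp: idx_box_short_last_def PiE_iff extensional_def)
qed

lemma Z_partial_snoc:
  assumes "N \<ge> 1"
  shows "Z_partial (vs @ [a]) s N
           = Z_partial vs s N * (\<Prod>m\<in>idx_box_short_last (length vs) N. Z_factor (vs @ [a]) (s + a) m)"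
  using prod.Int_Diff[OF finite_idx_box, of "Z_factor (vs @ [a]) s" "Suc (length vs)" N
      "{n. n (length vs) = 0}"]
  unfolding Z_partial_def [of "vs @ [a]"] prod_idx_box_last_pos prod_idx_box_last_zero[OF assms]
  by simp

lemma Z_prod_snoc:
  assumes pos: "\<forall>v\<in>set (vs @ [a]). Re v > 0" and s: "Re s > 1"
  shows "Z_prod (vs @ [a]) s = Z_prod vs s * Z_prod (vs @ [a]) (s + a)"
proof -
  have pos': "\<forall>v\<in>set vs. Re v > 0" and a: "Re a > 0" using pos by auto
  have "(\<lambda>N. \<Prod>m\<in>idx_box_short_last (length vs) N. Z_factor (vs @ [a]) (s + a) m)
          \<longlonglongrightarrow> Z_prod (vs @ [a]) (s + a)"
  proof (rule Z_prod_tendsto_exhaustion[OF pos _ _ _ _ filterlim_minus_const_nat_at_top[of 1]])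
    show "Re (s + a) > 1" using s a by simp
    show "finite (idx_box_short_last (length vs) N)" for N
      unfolding idx_box_short_last_def by (intro finite_PiE) auto
    show "idx_box (length (vs @ [a])) (N - 1) \<subseteq> idx_box_short_last (length vs) N" for N
      unfolding idx_box_short_last_def idx_box_def length_append_singleton by (intro PiE_mono) auto
    show "idx_box_short_last (length vs) N \<subseteq> multi_idx (length (vs @ [a]))" for N
      unfolding idx_box_short_last_def multi_idx_def length_append_singleton by (intro PiE_mono) auto
  qed
  with Z_partial_tendsto[OF pos' s]
  have "(\<lambda>N. Z_partial vs s N * (\<Prod>m\<in>idx_box_short_last (length vs) N. Z_factor (vs @ [a]) (s + a) m))
          \<longlonglongrightarrow> Z_prod vs s * Z_prod (vs @ [a]) (s + a)"
    by (rule tendsto_mult)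
  moreover have "eventually (\<lambda>N. Z_partial vs s N *
      (\<Prod>m\<in>idx_box_short_last (length vs) N. Z_factor (vs @ [a]) (s + a) m) = Z_partial (vs @ [a]) s N)
      sequentially"
    using eventually_ge_at_top[of 1] by eventually_elim (simp add: Z_partial_snoc)
  ultimately have "Z_partial (vs @ [a]) s \<longlonglongrightarrow> Z_prod vs s * Z_prod (vs @ [a]) (s + a)"
    by (rule Lim_transform_eventually)
  thus ?thesis by (rule LIMSEQ_unique[OF Z_partial_tendsto[OF pos s]])
qed

section \<open>Meromorphic continuation of the product\<close>

definition shift_count :: "complex \<Rightarrow> complex \<Rightarrow> nat" where
  "shift_count a s = (LEAST N. Re (s + of_nat N * a) > 1)"

lemma Re_shift_count_gt:
  assumes "Re a > 0"
  shows "Re (s + of_nat (shift_count a s) * a) > 1"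
proof -
  obtain N :: nat where "(1 - Re s) / Re a < real N" using reals_Archimedean2 by blast
  hence "Re (s + of_nat N * a) > 1" using assms by (simp add: field_simps)
  thus ?thesis unfolding shift_count_def by (rule LeastI)
qed

lemma shift_count_le: "Re (s + of_nat N * a) > 1 \<Longrightarrow> shift_count a s \<le> N"
  unfolding shift_count_def by (rule Least_le)

lemma shift_count_eq_0: "Re s > 1 \<Longrightarrow> shift_count a s = 0"
  using shift_count_le[of s 0 a] by simp

lemma Re_shift_gt_mono:
  assumes "Re a > 0" "Re (s + of_nat N * a) > 1" "N \<le> M"
  shows "Re (s + of_nat M * a) > 1"
proof -
  have "real N * Re a \<le> real M * Re a" using assms by (intro mult_right_mono) auto
  with assms(2) show ?thesis by simp
qed

lemma shift_count_add:
  assumes "Re a > 0" "shift_count a s = Suc k"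
  shows "shift_count a (s + a) = k"
proof -
  have "Re (s + a + of_nat k * a) > 1"
    using Re_shift_count_gt[OF assms(1), of s] assms(2) by (simp add: algebra_simps)
  hence "shift_count a (s + a) \<le> k" by (rule shift_count_le)
  moreover have "Re (s + of_nat (Suc (shift_count a (s + a))) * a) > 1"
    using Re_shift_count_gt[OF assms(1), of "s + a"] by (simp add: algebra_simps)
  hence "shift_count a s \<le> Suc (shift_count a (s + a))" by (rule shift_count_le)
  ultimately show ?thesis using assms(2) by simp
qed

text \<open>Iterating the shift relation until the argument reaches \<open>Re s > 1\<close> continues the
  product in the last parameter; the list is reversed so that this parameter can be removed by
  primitive recursion.\<close>
primrec Z_ext_rev :: "complex list \<Rightarrow> complex \<Rightarrow> complex" where
  "Z_ext_rev [] = zeta_ext"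
| "Z_ext_rev (a # rs) = (\<lambda>s. (\<Prod>m<shift_count a s. Z_ext_rev rs (s + of_nat m * a)) *
                          Z_prod (rev (a # rs)) (s + of_nat (shift_count a s) * a))"

definition Z_ext :: "complex list \<Rightarrow> complex \<Rightarrow> complex" where
  "Z_ext vs = Z_ext_rev (rev vs)"

definition Z_iterated :: "complex list \<Rightarrow> complex \<Rightarrow> nat \<Rightarrow> complex \<Rightarrow> complex" where
  "Z_iterated vs a N s = (\<Prod>m<N. Z_ext vs (s + of_nat m * a)) * Z_prod (vs @ [a]) (s + of_nat N * a)"

lemma Z_ext_Nil: "Z_ext [] = zeta_ext"
  by (simp add: Z_ext_def)

lemma Z_ext_snoc: "Z_ext (vs @ [a]) s = Z_iterated vs a (shift_count a s) s"
  by (simp add: Z_ext_def Z_iterated_def)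

lemma Z_prod_Nil: "Z_prod [] s = zeta_series s"
proof -
  have "idx_box 0 N = {\<lambda>_. undefined}" for N by (simp add: idx_box_def)
  hence "Z_partial [] s = (\<lambda>N. zeta_series s)"
    by (simp add: Z_partial_def Z_factor_def fun_eq_iff)
  thus ?thesis by (simp add: Z_prod_def)
qed

lemma Z_ext_eq_Z_prod:
  assumes "Re s > 1"
  shows "Z_ext vs s = Z_prod vs s"
proof (cases vs rule: rev_cases)
  case Nil
  thus ?thesis using assms by (simp add: Z_ext_Nil Z_prod_Nil zeta_ext_eq_zeta_series)
next
  case (snoc vs' a)
  thus ?thesis using shift_count_eq_0[OF assms] by (simp add: Z_ext_snoc Z_iterated_def)
qed

lemma Z_iterated_Suc:
  assumes pos: "\<forall>v\<in>set (vs @ [a]). Re v > 0" and "Re (s + of_nat N * a) > 1"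
  shows "Z_iterated vs a (Suc N) s = Z_iterated vs a N s"
proof -
  have "Z_prod (vs @ [a]) (s + of_nat N * a)
          = Z_prod vs (s + of_nat N * a) * Z_prod (vs @ [a]) (s + of_nat N * a + a)"
    by (rule Z_prod_snoc[OF pos assms(2)])
  also have "Z_prod vs (s + of_nat N * a) = Z_ext vs (s + of_nat N * a)"
    using Z_ext_eq_Z_prod[OF assms(2)] by simp
  also have "s + of_nat N * a + a = s + of_nat (Suc N) * a" by (simp add: algebra_simps)
  finally show ?thesis unfolding Z_iterated_def by (simp add: mult_ac)
qed

lemma Z_iterated_eq_Z_ext:
  assumes pos: "\<forall>v\<in>set (vs @ [a]). Re v > 0" and "shift_count a s \<le> N"
  shows "Z_iterated vs a N s = Z_ext (vs @ [a]) s"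
  using assms(2)
proof (induction N rule: dec_induct)
  case base thus ?case by (simp add: Z_ext_snoc)
next
  case (step n)
  have a: "Re a > 0" using pos by simp
  have "Re (s + of_nat n * a) > 1"
    by (rule Re_shift_gt_mono[OF a Re_shift_count_gt[OF a] step.hyps(1)])
  thus ?case using Z_iterated_Suc[OF pos] step.IH by simp
qed

lemma meromorphic_at_Z_ext_snoc:
  assumes pos: "\<forall>v\<in>set (vs @ [a]). Re v > 0" and IH: "Z_ext vs meromorphic_on UNIV"
  shows "Z_ext (vs @ [a]) meromorphic_on {z}"
proof -
  have a: "Re a > 0" using pos by simp
  define N where "N = shift_count a z"
  define U where "U = {s. Re s > 1 - real N * Re a}"
  have U: "open U" and zU: "z \<in> U"
    using Re_shift_count_gt[OF a, of z] by (auto simp: U_def N_def open_halfspace_Re_gt)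
  have "(\<lambda>s. Z_ext vs (s + of_nat m * a)) meromorphic_on {z}" for m
    by (rule meromorphic_on_compose[OF IH]) (auto intro!: analytic_intros)
  moreover have "(\<lambda>s. Z_prod (vs @ [a]) (s + of_nat N * a)) analytic_on U"
  proof -
    have "Z_prod (vs @ [a]) \<circ> (\<lambda>s. s + of_nat N * a) holomorphic_on U"
      by (rule holomorphic_on_compose_gen[OF _ holomorphic_Z_prod[OF pos]])
         (auto simp: U_def intro!: holomorphic_intros)
    thus ?thesis using U by (simp add: o_def analytic_on_open)
  qed
  hence "(\<lambda>s. Z_prod (vs @ [a]) (s + of_nat N * a)) meromorphic_on {z}"
    using zU by (intro analytic_on_imp_meromorphic_on) (auto elim: analytic_on_subset)
  ultimately have "Z_iterated vs a N meromorphic_on {z}"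
    unfolding Z_iterated_def [abs_def] by (intro meromorphic_on_mult meromorphic_on_prod)
  moreover have "eventually (\<lambda>s. Z_ext (vs @ [a]) s = Z_iterated vs a N s) (at z)"
    using eventually_at_in_open'[OF U zU]
  proof eventually_elim
    case (elim s)
    hence "shift_count a s \<le> N" by (intro shift_count_le) (simp add: U_def)
    thus ?case by (rule Z_iterated_eq_Z_ext[OF pos, symmetric])
  qed
  ultimately show ?thesis
    by (subst meromorphic_on_cong[where g = "Z_iterated vs a N" and B = "{z}"]) auto
qed

lemma meromorphic_Z_ext:
  assumes "\<forall>v\<in>set vs. Re v > 0"
  shows "Z_ext vs meromorphic_on UNIV"
  using assms
proof (induction vs rule: rev_induct)
  case Nil
  show ?case by (simp add: Z_ext_Nil meromorphic_zeta_ext)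
next
  case (snoc a vs)
  hence "Z_ext (vs @ [a]) meromorphic_on {z}" for z
    by (intro meromorphic_at_Z_ext_snoc) auto
  thus ?case by (subst meromorphic_on_meromorphic_at) auto
qed

lemma Z_ext_snoc_shift:
  assumes pos: "\<forall>v\<in>set (vs @ [a]). Re v > 0"
  shows "Z_ext (vs @ [a]) s = Z_ext vs s * Z_ext (vs @ [a]) (s + a)"
proof -
  have a: "Re a > 0" using pos by simp
  show ?thesis
  proof (cases "shift_count a s")
    case 0
    hence s: "Re s > 1" using Re_shift_count_gt[OF a, of s] by simp
    hence "Z_ext (vs @ [a]) (s + a) = Z_prod (vs @ [a]) (s + a)"
      using a by (intro Z_ext_eq_Z_prod) simp
    with Z_prod_snoc[OF pos s] show ?thesis by (simp only: Z_ext_eq_Z_prod[OF s])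
  next
    case (Suc k)
    have "Z_ext (vs @ [a]) s = Z_iterated vs a (Suc k) s" by (simp add: Z_ext_snoc Suc)
    also have "\<dots> = Z_ext vs s * Z_iterated vs a k (s + a)"
      unfolding Z_iterated_def prod.lessThan_Suc_shift by (simp add: algebra_simps)
    also have "Z_iterated vs a k (s + a) = Z_ext (vs @ [a]) (s + a)"
      by (simp add: Z_ext_snoc shift_count_add[OF a Suc])
    finally show ?thesis .
  qed
qed

section \<open>The alternating product over shifts\<close>

definition alt_shift_prod :: "complex list \<Rightarrow> (complex \<Rightarrow> complex) \<Rightarrow> complex \<Rightarrow> complex" where
  "alt_shift_prod vs F s = (\<Prod>K\<in>Pow {..<length vs}. F (s + (\<Sum>k\<in>K. vs ! k)) powi ((-1) ^ card K))"

lemma prod_Pow_lessThan_Suc: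
  fixes g :: "nat set \<Rightarrow> 'a::comm_monoid_mult"
  shows "(\<Prod>K\<in>Pow {..<Suc r}. g K) = (\<Prod>K\<in>Pow {..<r}. g K * g (insert r K))"
proof -
  have "inj_on (insert r) (Pow {..<r})"
    by (rule inj_onI) (auto simp: insert_ident subset_iff)
  moreover have "Pow {..<r} \<inter> insert r ` Pow {..<r} = {}" by auto
  ultimately have "(\<Prod>K\<in>Pow {..<r} \<union> insert r ` Pow {..<r}. g K)
                     = (\<Prod>K\<in>Pow {..<r}. g K) * (\<Prod>K\<in>Pow {..<r}. g (insert r K))"
    by (simp add: prod.union_disjoint prod.reindex)
  thus ?thesis by (simp add: lessThan_Suc Pow_insert prod.distrib)
qed

lemma alt_shift_prod_snoc:
  "alt_shift_prod (vs @ [a]) F s = alt_shift_prod vs (\<lambda>t. F t * inverse (F (t + a))) s"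
proof -
  define r where "r = length vs"
  define g where "g = (\<lambda>K. F (s + (\<Sum>k\<in>K. (vs @ [a]) ! k)) powi ((-1) ^ card K))"
  have "g K * g (insert r K)
          = (F (s + (\<Sum>k\<in>K. vs ! k)) * inverse (F (s + (\<Sum>k\<in>K. vs ! k) + a))) powi ((-1) ^ card K)"
    if K: "K \<in> Pow {..<r}" for K
  proof -
    have fin: "finite K" and r: "r \<notin> K" using K finite_subset by auto
    have sum_K: "(\<Sum>k\<in>K. (vs @ [a]) ! k) = (\<Sum>k\<in>K. vs ! k)"
      using K by (intro sum.cong) (auto simp: nth_append r_def)
    have "(\<Sum>k\<in>insert r K. (vs @ [a]) ! k) = a + (\<Sum>k\<in>K. vs ! k)"
      using fin r sum_K by (simp add: r_def)
    moreover have "((-1::int) ^ card (insert r K)) = - ((-1) ^ card K)"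
      using fin r by simp
    ultimately have "g K * g (insert r K) = F (s + (\<Sum>k\<in>K. vs ! k)) powi ((-1) ^ card K) *
                       F (s + (\<Sum>k\<in>K. vs ! k) + a) powi (- ((-1) ^ card K))"
      unfolding g_def sum_K by (simp add: algebra_simps)
    thus ?thesis by (simp add: power_int_mult_distrib power_int_minus power_int_inverse)
  qed
  hence "(\<Prod>K\<in>Pow {..<r}. g K * g (insert r K))
           = alt_shift_prod vs (\<lambda>t. F t * inverse (F (t + a))) s"
    unfolding alt_shift_prod_def r_def by (intro prod.cong) (auto simp: r_def)
  thus ?thesis
    unfolding alt_shift_prod_def g_def [symmetric] by (simp add: r_def prod_Pow_lessThan_Suc)
qed

lemma alt_shift_prod_cong:
  assumes "\<And>K. K \<subseteq> {..<length vs} \<Longrightarrow> F (s + (\<Sum>k\<in>K. vs ! k)) = G (s + (\<Sum>k\<in>K. vs ! k))"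
  shows "alt_shift_prod vs F s = alt_shift_prod vs G s"
  unfolding alt_shift_prod_def by (rule prod.cong) (use assms in auto)

lemma Re_add_sum_nth_ge:
  assumes "\<forall>v\<in>set vs. Re v > 0" "K \<subseteq> {..<length vs}"
  shows "Re (s + (\<Sum>k\<in>K. vs ! k)) \<ge> Re s"
proof -
  have "Re (vs ! k) \<ge> 0" if "k \<in> K" for k
    using assms nth_mem[of k vs] that by fastforce
  thus ?thesis by (simp add: Re_sum sum_nonneg)
qed

text \<open>Removing the last parameter turns the product into the one for the remaining parameters,
  by the shift relation applied at every shifted argument.\<close>
lemma alt_shift_prod_Z_prod_eq_zeta_series:
  assumes "\<forall>v\<in>set vs. Re v > 0"
  shows "\<exists>R. \<forall>s. Re s > R \<longrightarrow> alt_shift_prod vs (Z_prod vs) s = zeta_series s"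
  using assms
proof (induction vs rule: rev_induct)
  case Nil
  show ?case by (intro exI[of _ 0]) (simp add: alt_shift_prod_def Z_prod_Nil)
next
  case (snoc a vs)
  have pos: "\<forall>v\<in>set (vs @ [a]). Re v > 0" by fact
  hence pos': "\<forall>v\<in>set vs. Re v > 0" and a: "Re a > 0" by auto
  obtain R1 where R1: "\<And>s. Re s > R1 \<Longrightarrow> alt_shift_prod vs (Z_prod vs) s = zeta_series s"
    using snoc.IH[OF pos'] by blast
  obtain R2 where R2: "R2 \<ge> 2" "\<And>s. Re s \<ge> R2 \<Longrightarrow> Z_prod (vs @ [a]) s \<noteq> 0"
    using Z_prod_nonzero_right_half_plane[OF pos] by blast
  have "alt_shift_prod (vs @ [a]) (Z_prod (vs @ [a])) s = zeta_series s" if s: "Re s > max R1 R2" for s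
  proof -
    have "alt_shift_prod (vs @ [a]) (Z_prod (vs @ [a])) s
            = alt_shift_prod vs (\<lambda>t. Z_prod (vs @ [a]) t * inverse (Z_prod (vs @ [a]) (t + a))) s"
      by (rule alt_shift_prod_snoc)
    also have "\<dots> = alt_shift_prod vs (Z_prod vs) s"
    proof (rule alt_shift_prod_cong)
      fix K assume "K \<subseteq> {..<length vs}"
      with Re_add_sum_nth_ge[OF pos'] have t: "Re (s + (\<Sum>k\<in>K. vs ! k)) \<ge> Re s" by blast
      define t where "t = s + (\<Sum>k\<in>K. vs ! k)"
      have "Z_prod (vs @ [a]) (t + a) \<noteq> 0"
        using t s a R2 by (intro R2(2)) (simp add: t_def)
      moreover have "Z_prod (vs @ [a]) t = Z_prod vs t * Z_prod (vs @ [a]) (t + a)"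
        using t s R2 by (intro Z_prod_snoc[OF pos]) (simp add: t_def)
      ultimately show "Z_prod (vs @ [a]) t * inverse (Z_prod (vs @ [a]) (t + a)) = Z_prod vs t"
        by (simp add: field_simps)
    qed
    also have "\<dots> = zeta_series s" using s by (intro R1) simp
    finally show ?thesis .
  qed
  thus ?case by blast
qed

lemma meromorphic_alt_shift_prod:
  assumes "F meromorphic_on UNIV"
  shows "alt_shift_prod vs F meromorphic_on UNIV"
  unfolding alt_shift_prod_def [abs_def]
proof (intro meromorphic_on_prod meromorphic_on_powi)
  fix K
  show "(\<lambda>s. F (s + (\<Sum>k\<in>K. vs ! k))) meromorphic_on UNIV"
    by (rule meromorphic_on_compose[OF assms]) (auto intro!: analytic_intros)
qed

lemma alt_shift_prod_Z_ext_cosparse_eq: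
  assumes pos: "\<forall>v\<in>set vs. Re v > 0"
  shows "\<forall>\<^sub>\<approx>s. alt_shift_prod vs (Z_ext vs) s = zeta_ext s"
proof -
  obtain R where R: "\<And>s. Re s > R \<Longrightarrow> alt_shift_prod vs (Z_prod vs) s = zeta_series s"
    using alt_shift_prod_Z_prod_eq_zeta_series[OF pos] by blast
  define R' where "R' = max R 1"
  have "\<forall>\<^sub>\<approx>s\<in>UNIV. alt_shift_prod vs (Z_ext vs) s = zeta_ext s"
  proof (rule meromorphic_eq_cosparse_if_eq_on_open)
    show "alt_shift_prod vs (Z_ext vs) meromorphic_on UNIV"
      by (intro meromorphic_alt_shift_prod meromorphic_Z_ext pos)
    show "complex_of_real (R' + 1) \<in> {s. Re s > R'}" by simp
    fix s assume s: "s \<in> {s. Re s > R'}"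
    have "alt_shift_prod vs (Z_ext vs) s = alt_shift_prod vs (Z_prod vs) s"
    proof (rule alt_shift_prod_cong)
      fix K assume "K \<subseteq> {..<length vs}"
      hence "Re (s + (\<Sum>k\<in>K. vs ! k)) > 1"
        using Re_add_sum_nth_ge[OF pos, of K s] s by (simp add: R'_def)
      thus "Z_ext vs (s + (\<Sum>k\<in>K. vs ! k)) = Z_prod vs (s + (\<Sum>k\<in>K. vs ! k))"
        by (rule Z_ext_eq_Z_prod)
    qed
    also have "\<dots> = zeta_ext s"
      using s R[of s] zeta_ext_eq_zeta_series[of s] by (simp add: R'_def)
    finally show "alt_shift_prod vs (Z_ext vs) s = zeta_ext s" .
  qed (auto simp: meromorphic_zeta_ext open_halfspace_Re_gt)
  thus ?thesis by simp
qed

lemma prod_card_eq_alt_shift_prod: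
  "F s * (\<Prod>j\<in>{1..length ws}. \<Prod>K\<in>{K. K \<subseteq> {..<length ws} \<and> card K = j}.
            F (s + (\<Sum>k\<in>K. ws ! k)) powi ((-1) ^ j)) = alt_shift_prod ws F s"
proof -
  define r where "r = length ws"
  define g where "g = (\<lambda>K. F (s + (\<Sum>k\<in>K. ws ! k)) powi ((-1) ^ card K))"
  define S where "S = (\<lambda>j. {K. K \<subseteq> {..<r} \<and> card K = j})"
  have "finite (S j)" for j
    unfolding S_def by (rule finite_subset[of _ "Pow {..<r}"]) auto
  hence "(\<Prod>j\<in>{1..r}. prod g (S j)) = prod g (\<Union>(S ` {1..r}))"
    by (intro prod.UNION_disjoint [symmetric]) (auto simp: S_def)
  also have "\<Union>(S ` {1..r}) = Pow {..<r} - {{}}"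
  proof (intro equalityI subsetI)
    fix K assume K: "K \<in> Pow {..<r} - {{}}"
    hence "finite K" using finite_subset by auto
    with K have "card K \<ge> 1" "card K \<le> r"
      using card_mono[of "{..<r}" K] by (auto simp: Suc_le_eq card_gt_0_iff)
    with K show "K \<in> \<Union>(S ` {1..r})" by (auto simp: S_def)
  qed (auto simp: S_def)
  finally have "(\<Prod>j\<in>{1..r}. prod g (S j)) = prod g (Pow {..<r} - {{}})" .
  moreover have "(\<Prod>j\<in>{1..r}. \<Prod>K\<in>S j. F (s + (\<Sum>k\<in>K. ws ! k)) powi ((-1) ^ j))
                   = (\<Prod>j\<in>{1..r}. prod g (S j))"
    by (intro prod.cong refl) (auto simp: S_def g_def)
  moreover have "alt_shift_prod ws F s = g {} * prod g (Pow {..<r} - {{}})"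
    unfolding alt_shift_prod_def g_def [symmetric] r_def [symmetric] by (rule prod.remove) auto
  ultimately show ?thesis by (simp add: S_def r_def g_def)
qed

theorem proposition3p3p2:
  fixes ws :: "complex list"
  assumes "length ws \<ge> 1"
    and "\<forall>w\<in>set ws. Re w > 0"
  shows "(\<forall>s. Re s > 1 \<longrightarrow>
            (\<lambda>n. norm (Z_factor ws s n - 1)) summable_on multi_idx (length ws)
          \<and> (Z_partial ws s \<longlonglongrightarrow> Z_prod ws s))
     \<and> (\<exists>Zext :: complex list \<Rightarrow> complex \<Rightarrow> complex.
          (\<forall>vs. (\<forall>v\<in>set vs. Re v > 0) \<longrightarrow>
              Zext vs meromorphic_on UNIV \<and> (\<forall>s. Re s > 1 \<longrightarrow> Zext vs s = Z_prod vs s))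
        \<and> (\<forall>\<^sub>\<approx>s. Zext ws s = Zext (butlast ws) s * Zext ws (s + last ws))
        \<and> (\<forall>\<^sub>\<approx>s. Zext ws s *
               (\<Prod>j\<in>{1..length ws}. \<Prod>K\<in>{K. K \<subseteq> {..<length ws} \<and> card K = j}.
                  Zext ws (s + (\<Sum>k\<in>K. ws ! k)) powi ((-1) ^ j))
             = Zext [] s))"
proof (intro conjI allI impI exI[of _ Z_ext])
  fix s :: complex assume s: "Re s > 1"
  show "(\<lambda>n. norm (Z_factor ws s n - 1)) summable_on multi_idx (length ws)"
    by (rule abs_summable_Z_factor_minus_one[OF assms(2) s])
  show "Z_partial ws s \<longlonglongrightarrow> Z_prod ws s"
    by (rule Z_partial_tendsto[OF assms(2) s])
next
  fix vs :: "complex list" and s :: complex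
  assume "\<forall>v\<in>set vs. Re v > 0"
  thus "Z_ext vs meromorphic_on UNIV" by (rule meromorphic_Z_ext)
  assume "Re s > 1"
  thus "Z_ext vs s = Z_prod vs s" by (rule Z_ext_eq_Z_prod)
next
  obtain vs a where ws: "ws = vs @ [a]"
    using assms(1) by (cases ws rule: rev_cases) auto
  have "Z_ext ws s = Z_ext (butlast ws) s * Z_ext ws (s + last ws)" for s
    unfolding ws butlast_snoc last_snoc by (rule Z_ext_snoc_shift) (use assms(2) ws in simp)
  thus "\<forall>\<^sub>\<approx>s. Z_ext ws s = Z_ext (butlast ws) s * Z_ext ws (s + last ws)"
    by (intro always_eventually allI)
next
  show "\<forall>\<^sub>\<approx>s. Z_ext ws s * (\<Prod>j\<in>{1..length ws}. \<Prod>K\<in>{K. K \<subseteq> {..<length ws} \<and> card K = j}.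
          Z_ext ws (s + (\<Sum>k\<in>K. ws ! k)) powi ((-1) ^ j)) = Z_ext [] s"
    unfolding prod_card_eq_alt_shift_prod Z_ext_Nil by (rule alt_shift_prod_Z_ext_cosparse_eq[OF assms(2)])
qed

end
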